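(* Over profiles whose ballots are strict weak orders (ties allowed): (i) the Split Cycle VCCR $sc$ satisfies Anonymity, Neutrality, Availability, Homogeneity, Downward Homogeneity, Neutral Indifference, Neutral Reversal, Monotonicity, Coherent IIA, Coherent Defeat, and Positive Involvement in Defeat; (ii) any VCCR $f$ satisfying Anonymity, Neutrality, Availability, Downward Homogeneity, Neutral Indifference, Neutral Reversal, Monotonicity for two-candidate profiles, Coherent IIA, Coherent Defeat, and Positive Involvement in Defeat equals $sc$; (iii) the same holds if Downward Homogeneity and Neutral Indifference in (ii) are replaced by Homogeneity.
   Context: Fix infinite sets $\mathcal V$ (voters) and $\mathcal X$ (candidates). For finite $X$, $\mathcal W(X)$ is the set of strict weak orders on $X$ (irreflexive, transitive and negatively transitive relations); $x,y$ are tied in $\succ$ if neither $x\succ y$ nor $y\succ x$; the empty relation (everything tied) is allowed. A profile is a function $\mathbf P:V\to\mathcal W(X)$ for nonempty finite $V\subset\mathcal V$, $X\subset\mathcal X$; $V(\mathbf P)=V$, $X(\mathbf P)=X$. "Voter $i$ ranks $x$ above $y$" means $(x,y)\in\mathbf P(i)$ (strictly). $\mathbf P_{|Y}$ restricts ballots to $Y$. $\mathrm{Margin}_{\mathbf P}(x,y)$ = number of voters ranking $x$ strictly above $y$ minus number ranking $y$ strictly above $x$; $x$ is majority preferred to $y$ if it is $>0$. The margin graph $\mathcal M(\mathbf P)$ has vertices $X(\mathbf P)$ and edges $x\to y$ with weight $\mathrm{Margin}_{\mathbf P}(x,y)$ when positive. A majority path from $x_1$ to $x_n$ is $(x_1,\dots,x_n)$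 with all $\mathrm{Margin}_{\mathbf P}(x_i,x_{i+1})>0$; its strength is the minimum of these margins. A VCCR is a function $f$ giving for each profile an asymmetric relation $f(\mathbf P)$ on $X(\mathbf P)$ ("$x$ defeats $y$" iff $(x,y)\in f(\mathbf P)$). $sc$: $(x,y)\in sc(\mathbf P)$ iff $\mathrm{Margin}_{\mathbf P}(x,y)>0$ and it exceeds the strength of every majority path from $y$ to $x$. Moving up one place: given a strict weak order $\succ$ on finite $X$ and $x$ not $\succ$-greatest, let $x'\neq x$ be $\succ$-minimal among elements with $x\not\succ x'$. $\succ'$ results from moving $x$ up one place if $\succ'$ agrees with $\succ$ on pairs not involving $x$, and: if $x$ is tied with $x'$ in $\succ$, then in $\succ'$ $x$ is tied with no other element, $x\succ' x'$, and $y\succ x$ implies $y\succ' x$; if $x$ is tied with no other element in $\succ$, then $x$ is tied with $x'$ in $\succ'$. Axioms for a VCCR $f$: Anonymity (if $V(\mathbf P)=V(\mathbf P')$ and a bijection $\pi$ of voters has $\mathbf P'(i)=\mathbf P(\pi(i))$, then $f(\mathbf P)=f(\mathbf P')$); Neutrality (if same voters and candidates and a bijection $\pi$ of candidates has $(x,y)\in\mathbf P(i)\iff(\pi x,\pi y)\in\mathbf P'(i)$ for all $i,x,y$, then $(x,y)\in f(\mathbf P)\iff(\pi x,\pi y)\in f(\mathbf P')$); Availability (some candidate is defeated by no one in every $\mathbf P$); Homogeneity $f(\mathbf P)=f(2\mathbf P)$ and Downward Homogeneity $f(\mathbf P)\supseteq f(2\mathbf P)$, where $2\mathbf P$ replaces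 each voter by two copies; Neutral Indifference (adding a voter with the empty ballot leaves $f$ unchanged); Neutral Reversal (adding two voters with mutually converse ballots leaves $f$ unchanged); Monotonicity (resp. for two-candidate profiles): for every profile (resp. every two-candidate profile), if $\mathbf P'$ arises by moving $x$ up one place in one voter's ballot, $(x,y)\in f(\mathbf P)$ implies $(x,y)\in f(\mathbf P')$; Coherent IIA: with $\mathbf P\rightsquigarrow_{x,y}\mathbf P'$ meaning $\mathbf P_{|\{x,y\}}=\mathbf P'_{|\{x,y\}}$ and $\mathcal M(\mathbf P')$ obtainable from $\mathcal M(\mathbf P)$ by deleting zero or more candidates other than $x,y$ and deleting or reducing weights of zero or more edges not connecting $x,y$, if $(x,y)\in f(\mathbf P)$ and $\mathbf P\rightsquigarrow_{x,y}\mathbf P'$ then $(x,y)\in f(\mathbf P')$; Coherent Defeat: if $\mathrm{Margin}_{\mathbf P}(x,y)>0$ and no majority path from $y$ to $x$ exists, then $(x,y)\in f(\mathbf P)$; Positive Involvement in Defeat: if $(x,y)\notin f(\mathbf P)$ and $\mathbf P'$ adds one new voter ranking $y$ strictly above $x$, then $(x,y)\notin f(\mathbf P')$. *)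

theory Defs
  imports Main
begin

text \<open>Canonically P i = {} for voters outside V, so that a profile is determined by the triple.\<close>

type_synonym ('v,'c) vccr = "'v set \<Rightarrow> 'c set \<Rightarrow> ('v \<Rightarrow> ('c \<times> 'c) set) \<Rightarrow> ('c \<times> 'c) set"

definition swo :: "'c set \<Rightarrow> ('c \<times> 'c) set \<Rightarrow> bool" where
  "swo X R \<longleftrightarrow> R \<subseteq> X \<times> X \<and> (\<forall>x. (x,x) \<notin> R) \<and> trans R \<and>
     (\<forall>x\<in>X. \<forall>y\<in>X. \<forall>z\<in>X. (x,y) \<notin> R \<and> (y,z) \<notin> R \<longrightarrow> (x,z) \<notin> R)"

definition profile :: "'v set \<Rightarrow> 'c set \<Rightarrow> ('v \<Rightarrow> ('c \<times> 'c) set) \<Rightarrow> bool" where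
  "profile V X P \<longleftrightarrow> finite V \<and> V \<noteq> {} \<and> finite X \<and> X \<noteq> {} \<and>
     (\<forall>i\<in>V. swo X (P i)) \<and> (\<forall>i. i \<notin> V \<longrightarrow> P i = {})"

definition margin :: "'v set \<Rightarrow> ('v \<Rightarrow> ('c \<times> 'c) set) \<Rightarrow> 'c \<Rightarrow> 'c \<Rightarrow> int" where
  "margin V P x y = int (card {i\<in>V. (x,y) \<in> P i}) - int (card {i\<in>V. (y,x) \<in> P i})"

definition majority_path :: "'v set \<Rightarrow> 'c set \<Rightarrow> ('v \<Rightarrow> ('c \<times> 'c) set) \<Rightarrow> 'c list \<Rightarrow> bool" where
  "majority_path V X P p \<longleftrightarrow> length p \<ge> 2 \<and> set p \<subseteq> X \<and>
     (\<forall>k. Suc k < length p \<longrightarrow> margin V P (p ! k) (p ! Suc k) > 0)"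

definition path_strength :: "'v set \<Rightarrow> ('v \<Rightarrow> ('c \<times> 'c) set) \<Rightarrow> 'c list \<Rightarrow> int" where
  "path_strength V P p = Min {margin V P (p ! k) (p ! Suc k) | k. Suc k < length p}"

definition sc :: "('v,'c) vccr" where
  "sc V X P = {(x,y). x \<in> X \<and> y \<in> X \<and> margin V P x y > 0 \<and>
     (\<forall>p. majority_path V X P p \<and> hd p = y \<and> last p = x \<longrightarrow> margin V P x y > path_strength V P p)}"

definition is_vccr :: "('v,'c) vccr \<Rightarrow> bool" where
  "is_vccr f \<longleftrightarrow> (\<forall>V X P. profile V X P \<longrightarrow> f V X P \<subseteq> X \<times> X \<and>
      (\<forall>x y. (x,y) \<in> f V X P \<longrightarrow> (y,x) \<notin> f V X P))"

definition anonymity :: "('v,'c) vccr \<Rightarrow> bool" where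
  "anonymity f \<longleftrightarrow> (\<forall>V X P P' \<pi>. profile V X P \<and> profile V X P' \<and> bij_betw \<pi> V V \<and>
      (\<forall>i\<in>V. P' i = P (\<pi> i)) \<longrightarrow> f V X P = f V X P')"

definition neutrality :: "('v,'c) vccr \<Rightarrow> bool" where
  "neutrality f \<longleftrightarrow> (\<forall>V X P P' \<pi>. profile V X P \<and> profile V X P' \<and> bij_betw \<pi> X X \<and>
      (\<forall>i\<in>V. \<forall>x\<in>X. \<forall>y\<in>X. (x,y) \<in> P i \<longleftrightarrow> (\<pi> x, \<pi> y) \<in> P' i) \<longrightarrow>
      (\<forall>x\<in>X. \<forall>y\<in>X. (x,y) \<in> f V X P \<longleftrightarrow> (\<pi> x, \<pi> y) \<in> f V X P'))"

definition availability :: "('v,'c) vccr \<Rightarrow> bool" where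
  "availability f \<longleftrightarrow> (\<forall>V X P. profile V X P \<longrightarrow> (\<exists>x\<in>X. \<forall>y. (y,x) \<notin> f V X P))"

definition doubling :: "'v set \<Rightarrow> ('v \<Rightarrow> ('c \<times> 'c) set) \<Rightarrow> 'v set \<Rightarrow> ('v \<Rightarrow> ('c \<times> 'c) set) \<Rightarrow> bool" where
  "doubling V P V2 P2 \<longleftrightarrow> (\<exists>g1 g2. inj_on g1 V \<and> inj_on g2 V \<and> g1 ` V \<inter> g2 ` V = {} \<and>
      V2 = g1 ` V \<union> g2 ` V \<and> (\<forall>i\<in>V. P2 (g1 i) = P i \<and> P2 (g2 i) = P i))"

definition homogeneity :: "('v,'c) vccr \<Rightarrow> bool" where
  "homogeneity f \<longleftrightarrow> (\<forall>V X P V2 P2. profile V X P \<and> profile V2 X P2 \<and> doubling V P V2 P2 \<longrightarrow>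
      f V X P = f V2 X P2)"

definition downward_homogeneity :: "('v,'c) vccr \<Rightarrow> bool" where
  "downward_homogeneity f \<longleftrightarrow> (\<forall>V X P V2 P2. profile V X P \<and> profile V2 X P2 \<and> doubling V P V2 P2 \<longrightarrow>
      f V2 X P2 \<subseteq> f V X P)"

definition neutral_indifference :: "('v,'c) vccr \<Rightarrow> bool" where
  "neutral_indifference f \<longleftrightarrow> (\<forall>V X P j. profile V X P \<and> j \<notin> V \<longrightarrow>
      f (insert j V) X (P(j := {})) = f V X P)"

definition neutral_reversal :: "('v,'c) vccr \<Rightarrow> bool" where
  "neutral_reversal f \<longleftrightarrow> (\<forall>V X P j k R. profile V X P \<and> j \<notin> V \<and> k \<notin> V \<and> j \<noteq> k \<and> swo X R \<longrightarrow>
      f (insert j (insert k V)) X (P(j := R, k := R\<inverse>)) = f V X P)"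

text \<open>R' results from R (a strict weak order on X) by moving x up one place.\<close>
definition move_up :: "'c set \<Rightarrow> ('c \<times> 'c) set \<Rightarrow> 'c \<Rightarrow> ('c \<times> 'c) set \<Rightarrow> bool" where
  "move_up X R x R' \<longleftrightarrow> swo X R \<and> swo X R' \<and> x \<in> X \<and>
     (\<exists>y\<in>X. y \<noteq> x \<and> (x,y) \<notin> R) \<and>
     (\<forall>a b. a \<noteq> x \<and> b \<noteq> x \<longrightarrow> ((a,b) \<in> R' \<longleftrightarrow> (a,b) \<in> R)) \<and>
     (\<exists>x'\<in>X. x' \<noteq> x \<and> (x,x') \<notin> R \<and>
        (\<forall>w\<in>X. w \<noteq> x \<and> (x,w) \<notin> R \<longrightarrow> (x',w) \<notin> R) \<and>
        ((x,x') \<notin> R \<and> (x',x) \<notin> R \<longrightarrow>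
            (\<forall>z\<in>X. z \<noteq> x \<longrightarrow> (x,z) \<in> R' \<or> (z,x) \<in> R') \<and> (x,x') \<in> R' \<and>
            (\<forall>y. (y,x) \<in> R \<longrightarrow> (y,x) \<in> R')) \<and>
        ((\<forall>z\<in>X. z \<noteq> x \<longrightarrow> (x,z) \<in> R \<or> (z,x) \<in> R) \<longrightarrow>
            (x,x') \<notin> R' \<and> (x',x) \<notin> R'))"

definition monotonicity :: "('v,'c) vccr \<Rightarrow> bool" where
  "monotonicity f \<longleftrightarrow> (\<forall>V X P i x y R'. profile V X P \<and> i \<in> V \<and> move_up X (P i) x R' \<longrightarrow>
      (x,y) \<in> f V X P \<longrightarrow> (x,y) \<in> f V X (P(i := R')))"

definition monotonicity_two :: "('v,'c) vccr \<Rightarrow> bool" where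
  "monotonicity_two f \<longleftrightarrow> (\<forall>V X P i x y R'. profile V X P \<and> card X = 2 \<and> i \<in> V \<and> move_up X (P i) x R' \<longrightarrow>
      (x,y) \<in> f V X P \<longrightarrow> (x,y) \<in> f V X (P(i := R')))"

definition coh_reduct :: "'c \<Rightarrow> 'c \<Rightarrow> 'v set \<Rightarrow> 'c set \<Rightarrow> ('v \<Rightarrow> ('c \<times> 'c) set) \<Rightarrow>
     'v set \<Rightarrow> 'c set \<Rightarrow> ('v \<Rightarrow> ('c \<times> 'c) set) \<Rightarrow> bool" where
  "coh_reduct x y V X P V' X' P' \<longleftrightarrow> x \<in> X' \<and> y \<in> X' \<and> X' \<subseteq> X \<and> V' = V \<and>
     (\<forall>i\<in>V. P i \<inter> ({x,y} \<times> {x,y}) = P' i \<inter> ({x,y} \<times> {x,y})) \<and>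
     (\<forall>a\<in>X'. \<forall>b\<in>X'. {a,b} \<noteq> {x,y} \<and> margin V' P' a b > 0 \<longrightarrow> margin V P a b \<ge> margin V' P' a b)"

definition coherent_IIA :: "('v,'c) vccr \<Rightarrow> bool" where
  "coherent_IIA f \<longleftrightarrow> (\<forall>V X P V' X' P' x y. profile V X P \<and> profile V' X' P' \<and>
      coh_reduct x y V X P V' X' P' \<and> (x,y) \<in> f V X P \<longrightarrow> (x,y) \<in> f V' X' P')"

definition coherent_defeat :: "('v,'c) vccr \<Rightarrow> bool" where
  "coherent_defeat f \<longleftrightarrow> (\<forall>V X P x y. profile V X P \<and> x \<in> X \<and> y \<in> X \<and> margin V P x y > 0 \<and>
      \<not> (\<exists>p. majority_path V X P p \<and> hd p = y \<and> last p = x) \<longrightarrow> (x,y) \<in> f V X P)"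

definition positive_involvement_defeat :: "('v,'c) vccr \<Rightarrow> bool" where
  "positive_involvement_defeat f \<longleftrightarrow> (\<forall>V X P j R x y. profile V X P \<and> j \<notin> V \<and> swo X R \<and>
      (y,x) \<in> R \<and> (x,y) \<notin> f V X P \<longrightarrow> (x,y) \<notin> f (insert j V) X (P(j := R)))"

end

theory Submission
  imports Defs "HOL-Library.Transitive_Closure_Table" "HOL-Library.Disjoint_Sets"
begin

text \<open>
  A Split Cycle defeat of \<open>y\<close> by \<open>x\<close> is read off the graph of edges whose margin is at least
  \<open>margin x y\<close>: \<open>x\<close> defeats \<open>y\<close> iff that margin is positive and \<open>y\<close> cannot reach \<open>x\<close> in
  this graph. The axioms for Split Cycle follow by comparing these graphs before and after the
  change of profile that each axiom describes.

  For the characterization, every Split Cycle defeat is forced: adding \<open>margin x y - 1\<close> ballots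
  that rank \<open>y\<close> just above \<open>x\<close> and the other candidates reachable from \<open>y\<close> at the bottom
  removes every majority path from \<open>y\<close> to \<open>x\<close>, so Coherent Defeat makes \<open>x\<close> defeat \<open>y\<close>
  there, and Positive Involvement in Defeat carries this back. Conversely, a defeat has positive
  margin, since on the two candidates alone (Coherent IIA) a negative margin contradicts Coherent
  Defeat and a zero margin is symmetric under Anonymity and Neutrality. If it were not a Split Cycle defeat, it would lie on a cycle of edges with margins
  at least as large. After padding the profile with reversed pairs of ballots (Neutral Reversal),
  Coherent IIA transfers the defeat to a rotation-invariant profile on that cycle, where Anonymity
  and Neutrality rotate it onto every edge of the cycle, contradicting Availability.
\<close>

definition vote :: "('c \<times> 'c) set \<Rightarrow> 'c \<Rightarrow> 'c \<Rightarrow> int" where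
  "vote R a b = of_bool ((a,b) \<in> R) - of_bool ((b,a) \<in> R)"

lemma vote_antisym: "vote R b a = - vote R a b"
  by (simp add: vote_def)

lemma vote_empty [simp]: "vote {} a b = 0"
  by (simp add: vote_def)

lemma vote_converse [simp]: "vote (R\<inverse>) a b = - vote R a b"
  by (simp add: vote_def)

lemma vote_bounded: "\<bar>vote R a b\<bar> \<le> 1"
  by (simp add: vote_def)

lemma swo_asym: "swo X R \<Longrightarrow> (a,b) \<in> R \<Longrightarrow> (b,a) \<notin> R"
  unfolding swo_def trans_def by blast

lemma swo_trans: "swo X R \<Longrightarrow> (a,b) \<in> R \<Longrightarrow> (b,c) \<in> R \<Longrightarrow> (a,c) \<in> R"
  unfolding swo_def trans_def by blast

lemma swo_negtrans:
  "swo X R \<Longrightarrow> a \<in> X \<Longrightarrow> b \<in> X \<Longrightarrow> c \<in> X \<Longrightarrow> (a,b) \<notin> R \<Longrightarrow> (b,c) \<notin> R \<Longrightarrow> (a,c) \<notin> R"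
  unfolding swo_def by blast

lemma swo_field: "swo X R \<Longrightarrow> (a,b) \<in> R \<Longrightarrow> a \<in> X \<and> b \<in> X \<and> a \<noteq> b"
  unfolding swo_def by blast

lemma swo_empty: "swo X {}"
  unfolding swo_def trans_def by auto

lemma swo_converse: "swo X R \<Longrightarrow> swo X (R\<inverse>)"
  unfolding swo_def trans_def by blast

lemma swo_restrict: "swo X R \<Longrightarrow> Y \<subseteq> X \<Longrightarrow> swo Y (R \<inter> (Y \<times> Y))"
  unfolding swo_def trans_def by blast

lemma vote_eq_1_iff: "swo X R \<Longrightarrow> vote R a b = 1 \<longleftrightarrow> (a,b) \<in> R"
  using swo_asym[of X R] by (auto simp: vote_def)

lemma vote_eq_minus_1_iff: "swo X R \<Longrightarrow> vote R a b = -1 \<longleftrightarrow> (b,a) \<in> R"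
  using swo_asym[of X R] by (auto simp: vote_def)

lemma vote_eq_if_restrict_eq:
  assumes "R \<inter> ({x,y} \<times> {x,y}) = R' \<inter> ({x,y} \<times> {x,y})"
  shows "vote R x y = vote R' x y"
proof -
  have "(x,y) \<in> R \<longleftrightarrow> (x,y) \<in> R'" "(y,x) \<in> R \<longleftrightarrow> (y,x) \<in> R'"
    using arg_cong[OF assms, of "\<lambda>S. (x,y) \<in> S"] arg_cong[OF assms, of "\<lambda>S. (y,x) \<in> S"] by auto
  then show ?thesis
    by (simp add: vote_def)
qed

lemma restrict_eq_if_vote_eq:
  assumes "swo X R" "swo X' R'" "vote R x y = vote R' x y"
  shows "R \<inter> ({x,y} \<times> {x,y}) = R' \<inter> ({x,y} \<times> {x,y})"
proof -
  have "(x,y) \<in> R \<longleftrightarrow> (x,y) \<in> R'" "(y,x) \<in> R \<longleftrightarrow> (y,x) \<in> R'"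
    using assms vote_eq_1_iff[OF assms(1), of x y] vote_eq_1_iff[OF assms(2), of x y]
      vote_eq_minus_1_iff[OF assms(1), of x y] vote_eq_minus_1_iff[OF assms(2), of x y]
    by auto
  moreover have "(z,z) \<notin> R" "(z,z) \<notin> R'" for z
    using swo_field[OF assms(1)] swo_field[OF assms(2)] by auto
  ultimately show ?thesis
    by auto
qed

definition rank_order :: "'c set \<Rightarrow> ('c \<Rightarrow> nat) \<Rightarrow> ('c \<times> 'c) set" where
  "rank_order X rk = {(a,b). a \<in> X \<and> b \<in> X \<and> rk b < rk a}"

lemma swo_rank_order: "swo X (rank_order X rk)"
  unfolding swo_def rank_order_def trans_def by auto

lemma rank_order_equivariant:
  assumes "\<forall>z\<in>X. \<pi> z \<in> X" "\<forall>z\<in>X. rk' (\<pi> z) = rk z" "a \<in> X" "b \<in> X"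
  shows "(a,b) \<in> rank_order X rk \<longleftrightarrow> (\<pi> a, \<pi> b) \<in> rank_order X rk'"
  using assms by (simp add: rank_order_def)

lemma margin_eq_sum_vote: "finite V \<Longrightarrow> margin V P a b = (\<Sum>i\<in>V. vote (P i) a b)"
  by (simp add: margin_def vote_def sum_subtractf Collect_conj_eq Int_commute)

lemma margin_antisym: "margin V P b a = - margin V P a b"
  by (simp add: margin_def)

lemma margin_self [simp]: "margin V P a a = 0"
  by (simp add: margin_def)

lemma margin_insert_voter:
  assumes "finite V" "j \<notin> V"
  shows "margin (insert j V) (P(j := R)) a b = margin V P a b + vote R a b"
proof -
  have "(\<Sum>i\<in>V. vote ((P(j := R)) i) a b) = (\<Sum>i\<in>V. vote (P i) a b)"
    using assms(2) by (intro sum.cong) auto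
  then show ?thesis
    using assms by (simp add: margin_eq_sum_vote)
qed

lemma margin_update_voter:
  assumes "finite V" "i \<in> V"
  shows "margin V (P(i := R)) a b = margin V P a b - vote (P i) a b + vote R a b"
proof -
  have V: "V = insert i (V - {i})"
    using assms(2) by blast
  have "margin V (P(i := R)) a b = margin (V - {i}) P a b + vote R a b"
    using margin_insert_voter[of "V - {i}" i P R] assms V by simp
  moreover have "margin V P a b = margin (V - {i}) P a b + vote (P i) a b"
    using margin_insert_voter[of "V - {i}" i P "P i"] assms V by (simp add: fun_upd_idem)
  ultimately show ?thesis
    by simp
qed

lemma profile_insert_voter:
  "profile V X P \<Longrightarrow> j \<notin> V \<Longrightarrow> swo X R \<Longrightarrow> profile (insert j V) X (P(j := R))"
  unfolding profile_def by auto

section \<open>Walks in relations\<close>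

lemma trancl_iff_successively:
  "(a,b) \<in> r\<^sup>+ \<longleftrightarrow>
     (\<exists>p. 2 \<le> length p \<and> hd p = a \<and> last p = b \<and> successively (\<lambda>u v. (u,v) \<in> r) p)"
proof
  assume "(a,b) \<in> r\<^sup>+"
  then show "\<exists>p. 2 \<le> length p \<and> hd p = a \<and> last p = b \<and> successively (\<lambda>u v. (u,v) \<in> r) p"
  proof (induction rule: trancl_induct)
    case (base b)
    then show ?case
      by (intro exI[of _ "[a,b]"]) auto
  next
    case (step b c)
    then obtain p where "2 \<le> length p" "hd p = a" "last p = b" "successively (\<lambda>u v. (u,v) \<in> r) p"
      by blast
    with step.hyps(2) show ?case
      by (intro exI[of _ "p @ [c]"]) (auto simp: successively_append_iff hd_append)
  qed
next
  assume "\<exists>p. 2 \<le> length p \<and> hd p = a \<and> last p = b \<and> successively (\<lambda>u v. (u,v) \<in> r) p"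
  then obtain p where "2 \<le> length p" "hd p = a" "last p = b" "successively (\<lambda>u v. (u,v) \<in> r) p"
    by blast
  then show "(a,b) \<in> r\<^sup>+"
  proof (induction p arbitrary: a rule: induct_list012)
    case (3 u v p)
    then show ?case
      by (cases p) (auto intro: trancl_into_trancl2)
  qed auto
qed

lemma successively_set_subset:
  assumes "successively (\<lambda>u v. (u,v) \<in> r) p" "2 \<le> length p" "r \<subseteq> X \<times> X"
  shows "set p \<subseteq> X"
  using assms
proof (induction p rule: induct_list012)
  case (3 u v p)
  then show ?case
    by (cases p) auto
qed auto

lemma trancl_map:
  assumes "(a,b) \<in> r\<^sup>+" "\<And>u v. (u,v) \<in> r \<Longrightarrow> (h u, h v) \<in> s"
  shows "(h a, h b) \<in> s\<^sup>+"
  using assms(1)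
proof (induction rule: trancl_induct)
  case (base b)
  then show ?case
    using assms(2) by blast
next
  case (step b c)
  then show ?case
    using assms(2) by (meson trancl.trancl_into_trancl)
qed

lemma trancl_not_leaving_target:
  assumes "(a,b) \<in> r\<^sup>+" "a \<noteq> b"
  shows "(a,b) \<in> {(u,v) \<in> r. u \<noteq> b}\<^sup>+"
  using assms
proof (induction rule: converse_trancl_induct)
  case (step a c)
  then show ?case
    by (cases "c = b") (auto intro: trancl_into_trancl2)
qed auto

lemma trancl_bottleneck:
  fixes w :: "'a \<times> 'a \<Rightarrow> 'b::linorder"
  assumes "(a,b) \<in> r\<^sup>+"
  shows "\<exists>u v. (u,v) \<in> r \<and> (a,u) \<in> {e \<in> r. w (u,v) \<le> w e}\<^sup>* \<and> (v,b) \<in> {e \<in> r. w (u,v) \<le> w e}\<^sup>*"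
  using assms
proof (induction rule: trancl_induct)
  case (base b)
  then show ?case
    by blast
next
  case (step b c)
  then obtain u v where uv: "(u,v) \<in> r" "(a,u) \<in> {e \<in> r. w (u,v) \<le> w e}\<^sup>*"
    "(v,b) \<in> {e \<in> r. w (u,v) \<le> w e}\<^sup>*"
    by blast
  show ?case
  proof (cases "w (u,v) \<le> w (b,c)")
    case True
    then have "(v,c) \<in> {e \<in> r. w (u,v) \<le> w e}\<^sup>*"
      using uv(3) step.hyps(2) by (simp add: rtrancl.rtrancl_into_rtrancl)
    then show ?thesis
      using uv by blast
  next
    case False
    let ?S = "{e \<in> r. w (b,c) \<le> w e}"
    have "{e \<in> r. w (u,v) \<le> w e} \<subseteq> ?S"
      using False by auto
    then have "(a,u) \<in> ?S\<^sup>*" "(v,b) \<in> ?S\<^sup>*"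
      using uv rtrancl_mono by blast+
    moreover have "(u,v) \<in> ?S"
      using False uv(1) by simp
    ultimately have "(a,b) \<in> ?S\<^sup>*"
      by (meson rtrancl.rtrancl_into_rtrancl rtrancl_trans)
    then show ?thesis
      using step.hyps(2) by blast
  qed
qed

lemma not_trancl_leaving_closed:
  assumes "r `` A \<subseteq> A" "a \<in> A" "b \<notin> A"
  shows "(a,b) \<notin> r\<^sup>+"
proof
  assume "(a,b) \<in> r\<^sup>+"
  then have "b \<in> r\<^sup>* `` A"
    using \<open>a \<in> A\<close> by (intro ImageI trancl_into_rtrancl)
  then show False
    using Image_closed_trancl[OF assms(1)] \<open>b \<notin> A\<close> by simp
qed

lemma rtrancl_path_successively:
  "rtrancl_path (\<lambda>u v. (u,v) \<in> r) a xs b \<Longrightarrow> successively (\<lambda>u v. (u,v) \<in> r) (a # xs) \<and> last (a # xs) = b"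
  by (induction rule: rtrancl_path.induct) auto

lemma trancl_distinct_path:
  assumes "(a,b) \<in> r\<^sup>+" "a \<noteq> b"
  obtains xs where "distinct (a # xs)" "xs \<noteq> []" "last xs = b" "successively (\<lambda>u v. (u,v) \<in> r) (a # xs)"
proof -
  have "(\<lambda>u v. (u,v) \<in> r)\<^sup>*\<^sup>* a b"
    using trancl_into_rtrancl[OF assms(1)] by (simp add: rtranclp_rtrancl_eq)
  then obtain ys where "rtrancl_path (\<lambda>u v. (u,v) \<in> r) a ys b"
    by (auto simp: rtranclp_eq_rtrancl_path)
  then obtain xs where path: "rtrancl_path (\<lambda>u v. (u,v) \<in> r) a xs b" and "distinct (a # xs)"
    by (rule rtrancl_path_distinct)
  have "xs \<noteq> []"
    using path assms(2) rtrancl_path.cases by fastforce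
  then show thesis
    using that[OF \<open>distinct (a # xs)\<close> \<open>xs \<noteq> []\<close>] rtrancl_path_successively[OF path] by simp
qed

lemma close_distinct_path:
  assumes "distinct (y # xs)" "last xs = x" "butlast xs \<noteq> []"
  shows "distinct (x # y # butlast xs)" "(x # y # butlast xs) @ [x] = x # y # xs"
    "3 \<le> length (x # y # butlast xs)"
proof -
  obtain ys where "xs = ys @ [x]"
    using assms(2,3) by (cases xs rule: rev_cases) auto
  then show "distinct (x # y # butlast xs)" "(x # y # butlast xs) @ [x] = x # y # xs"
    "3 \<le> length (x # y # butlast xs)"
    using assms(1,3) by (auto simp: Suc_le_eq)
qed

section \<open>Split Cycle through threshold graphs\<close>

definition threshold_graph :: "'v set \<Rightarrow> 'c set \<Rightarrow> ('v \<Rightarrow> ('c \<times> 'c) set) \<Rightarrow> int \<Rightarrow> ('c \<times> 'c) set" where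
  "threshold_graph V X P k = {(a,b). a \<in> X \<and> b \<in> X \<and> k \<le> margin V P a b}"

lemma threshold_graph_antimono: "k \<le> l \<Longrightarrow> threshold_graph V X P l \<subseteq> threshold_graph V X P k"
  by (auto simp: threshold_graph_def)

lemma strong_majority_path_iff:
  assumes "0 < k"
  shows "majority_path V X P p \<and> k \<le> path_strength V P p \<longleftrightarrow>
    2 \<le> length p \<and> successively (\<lambda>u v. (u,v) \<in> threshold_graph V X P k) p"
proof (cases "2 \<le> length p")
  case True
  have edges: "{margin V P (p!i) (p!Suc i) |i. Suc i < length p} =
      (\<lambda>i. margin V P (p!i) (p!Suc i)) ` {i. Suc i < length p}"
    by auto
  have "finite {i. Suc i < length p}" "{i. Suc i < length p} \<noteq> {}"
    using True by (auto intro: finite_subset[of _ "{..<length p}"] exI[of _ 0])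
  then have strength: "k \<le> path_strength V P p \<longleftrightarrow>
      (\<forall>i. Suc i < length p \<longrightarrow> k \<le> margin V P (p!i) (p!Suc i))"
    unfolding path_strength_def edges by (subst Min_ge_iff) auto
  have "set p \<subseteq> X"
    if "successively (\<lambda>u v. (u,v) \<in> threshold_graph V X P k) p"
    using successively_set_subset[OF that True] by (auto simp: threshold_graph_def)
  then show ?thesis
    using True assms
    unfolding majority_path_def strength successively_conv_nth threshold_graph_def
    by (auto dest: order.strict_trans2[OF assms])
qed (simp add: majority_path_def)

lemma sc_iff:
  "(x,y) \<in> sc V X P \<longleftrightarrow> x \<in> X \<and> y \<in> X \<and> 0 < margin V P x y \<and>
     (y,x) \<notin> (threshold_graph V X P (margin V P x y))\<^sup>+"
proof -
  have "(\<forall>p. majority_path V X P p \<and> hd p = y \<and> last p = x \<longrightarrow> margin V P x y > path_strength V P p)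
      \<longleftrightarrow> (y,x) \<notin> (threshold_graph V X P (margin V P x y))\<^sup>+" if "0 < margin V P x y"
    unfolding trancl_iff_successively using strong_majority_path_iff[OF that, of V X P]
    by (metis not_le)
  then show ?thesis
    unfolding sc_def by auto
qed

lemma majority_path_iff_trancl:
  "(\<exists>p. majority_path V X P p \<and> hd p = a \<and> last p = b) \<longleftrightarrow> (a,b) \<in> (threshold_graph V X P 1)\<^sup>+"
proof -
  have "majority_path V X P p \<longleftrightarrow>
      2 \<le> length p \<and> successively (\<lambda>u v. (u,v) \<in> threshold_graph V X P 1) p" for p
  proof
    assume "majority_path V X P p"
    then show "2 \<le> length p \<and> successively (\<lambda>u v. (u,v) \<in> threshold_graph V X P 1) p"
      by (auto simp: majority_path_def successively_conv_nth threshold_graph_def)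
  next
    assume "2 \<le> length p \<and> successively (\<lambda>u v. (u,v) \<in> threshold_graph V X P 1) p"
    then show "majority_path V X P p"
      using strong_majority_path_iff[of 1 V X P p] by simp
  qed
  then show ?thesis
    unfolding trancl_iff_successively by blast
qed

lemma sc_cong:
  assumes "\<And>a b. margin V' P' a b = margin V P a b"
  shows "sc V' X P' = sc V X P"
proof -
  have "threshold_graph V' X P' k = threshold_graph V X P k" for k
    by (simp add: threshold_graph_def assms)
  then show ?thesis
    by (auto simp: sc_iff assms)
qed

section \<open>Split Cycle satisfies the axioms\<close>

lemma sc_is_vccr: "is_vccr sc"
  unfolding is_vccr_def
proof (intro allI impI conjI)
  fix V X and P :: "'v \<Rightarrow> ('c \<times> 'c) set" and x y
  show "sc V X P \<subseteq> X \<times> X"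
    by (auto simp: sc_iff)
  assume "(x,y) \<in> sc V X P"
  then show "(y,x) \<notin> sc V X P"
    by (simp add: sc_iff margin_antisym[of V P x y])
qed

lemma sc_anonymity: "anonymity sc"
  unfolding anonymity_def
proof (intro allI impI)
  fix V X P P' \<pi>
  assume "profile V X P \<and> profile V X P' \<and> bij_betw \<pi> V V \<and> (\<forall>i\<in>V. P' i = P (\<pi> i))"
  then have fin: "finite V" and \<pi>: "bij_betw \<pi> V V" and P': "\<forall>i\<in>V. P' i = P (\<pi> i)"
    by (auto simp: profile_def)
  have "margin V P' a b = margin V P a b" for a b
  proof -
    have "margin V P' a b = (\<Sum>i\<in>V. vote (P (\<pi> i)) a b)"
      unfolding margin_eq_sum_vote[OF fin] using P' by (intro sum.cong) auto
    also have "\<dots> = margin V P a b"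
      unfolding margin_eq_sum_vote[OF fin] by (rule sum.reindex_bij_betw[OF \<pi>])
    finally show ?thesis .
  qed
  then show "sc V X P = sc V X P'"
    by (metis sc_cong)
qed

lemma sc_neutrality: "neutrality sc"
  unfolding neutrality_def
proof (intro allI impI ballI)
  fix V X P P' \<pi> x y
  assume a: "profile V X P \<and> profile V X P' \<and> bij_betw \<pi> X X \<and>
      (\<forall>i\<in>V. \<forall>x\<in>X. \<forall>y\<in>X. (x,y) \<in> P i \<longleftrightarrow> (\<pi> x, \<pi> y) \<in> P' i)"
    and xy: "x \<in> X" "y \<in> X"
  define \<rho> where "\<rho> = inv_into X \<pi>"
  have \<pi>: "\<pi> a \<in> X" "\<rho> (\<pi> a) = a" if "a \<in> X" for a
    using a that by (auto simp: \<rho>_def bij_betw_def)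
  have \<rho>: "\<rho> a \<in> X" "\<pi> (\<rho> a) = a" if "a \<in> X" for a
    using a that by (auto simp: \<rho>_def bij_betw_def inv_into_into f_inv_into_f)
  have margin: "margin V P' (\<pi> a) (\<pi> b) = margin V P a b" if "a \<in> X" "b \<in> X" for a b
    using a that by (simp add: margin_eq_sum_vote profile_def vote_def)
  have "(u,v) \<in> threshold_graph V X P k \<Longrightarrow> (\<pi> u, \<pi> v) \<in> threshold_graph V X P' k"
    and "(u,v) \<in> threshold_graph V X P' k \<Longrightarrow> (\<rho> u, \<rho> v) \<in> threshold_graph V X P k" for u v k
    using margin[of "\<rho> u" "\<rho> v"] by (auto simp: threshold_graph_def margin \<pi> \<rho>)
  then have "(y,x) \<in> (threshold_graph V X P k)\<^sup>+ \<longleftrightarrow> (\<pi> y, \<pi> x) \<in> (threshold_graph V X P' k)\<^sup>+" for k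
    using trancl_map[of "\<pi> y" "\<pi> x" _ \<rho>] trancl_map[of y x _ \<pi>] xy \<pi> by metis
  then show "(x,y) \<in> sc V X P \<longleftrightarrow> (\<pi> x, \<pi> y) \<in> sc V X P'"
    using xy by (simp add: sc_iff margin \<pi>)
qed

lemma sc_coherent_defeat: "coherent_defeat sc"
  unfolding coherent_defeat_def sc_def by auto

lemma sc_neutral_indifference: "neutral_indifference sc"
  unfolding neutral_indifference_def
proof (intro allI impI)
  fix V X P j
  assume "profile V X P \<and> j \<notin> V"
  then have "margin (insert j V) (P(j := {})) a b = margin V P a b" for a b
    by (simp add: margin_insert_voter profile_def)
  then show "sc (insert j V) X (P(j := {})) = sc V X P"
    by (rule sc_cong)
qed

lemma sc_neutral_reversal: "neutral_reversal sc"
  unfolding neutral_reversal_def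
proof (intro allI impI)
  fix V X P j k R
  assume a: "profile V X P \<and> j \<notin> V \<and> k \<notin> V \<and> j \<noteq> k \<and> swo X R"
  then have "P(j := R, k := R\<inverse>) = P(k := R\<inverse>, j := R)"
    using fun_upd_twist[of j k P R "R\<inverse>"] by simp
  moreover have "margin (insert j (insert k V)) (P(k := R\<inverse>, j := R)) a b = margin V P a b" for a b
    using a by (simp add: margin_insert_voter profile_def)
  ultimately show "sc (insert j (insert k V)) X (P(j := R, k := R\<inverse>)) = sc V X P"
    by (metis sc_cong)
qed

lemma move_up_cases:
  assumes "move_up X R x R'"
  obtains (tied) x' where "x' \<in> X" "x' \<noteq> x" "(x,x') \<notin> R" "(x',x) \<notin> R" "(x,x') \<in> R'"
  | (alone) x' where "x' \<in> X" "x' \<noteq> x" "(x',x) \<in> R" "(x,x') \<notin> R'" "(x',x) \<notin> R'"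
      "\<forall>z\<in>X. z \<noteq> x \<longrightarrow> (x,z) \<in> R \<or> (z,x) \<in> R"
proof -
  obtain x' where x': "x' \<in> X" "x' \<noteq> x" "(x,x') \<notin> R"
    and min: "\<forall>w\<in>X. w \<noteq> x \<and> (x,w) \<notin> R \<longrightarrow> (x',w) \<notin> R"
    and tied: "(x,x') \<notin> R \<and> (x',x) \<notin> R \<longrightarrow> (x,x') \<in> R'"
    and alone: "(\<forall>z\<in>X. z \<noteq> x \<longrightarrow> (x,z) \<in> R \<or> (z,x) \<in> R) \<longrightarrow> (x,x') \<notin> R' \<and> (x',x) \<notin> R'"
    using assms unfolding move_up_def by blast
  have "x \<in> X" "swo X R"
    using assms unfolding move_up_def by blast+
  show thesis
  proof (cases "(x',x) \<in> R")
    case False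
    then show thesis
      using that(1) x' tied by blast
  next
    case True
    have "(x,z) \<in> R \<or> (z,x) \<in> R" if "z \<in> X" "z \<noteq> x" for z
      using min swo_negtrans[OF \<open>swo X R\<close> \<open>x' \<in> X\<close> that(1) \<open>x \<in> X\<close>] True that by blast
    then show thesis
      using that(2) x' True alone by blast
  qed
qed

lemma move_up_keeps_wins:
  assumes "move_up X R x R'" "(x,z) \<in> R"
  shows "(x,z) \<in> R'"
proof -
  have R: "swo X R" and R': "swo X R'" and "x \<in> X"
    and unchanged: "\<forall>a b. a \<noteq> x \<and> b \<noteq> x \<longrightarrow> ((a,b) \<in> R' \<longleftrightarrow> (a,b) \<in> R)"
    using assms(1) unfolding move_up_def by blast+
  have "z \<in> X" "z \<noteq> x"
    using swo_field[OF R assms(2)] by auto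
  from assms(1) show ?thesis
  proof (cases rule: move_up_cases)
    case (tied x')
    then have "(x',z) \<in> R"
      using swo_negtrans[OF R \<open>x \<in> X\<close> \<open>x' \<in> X\<close> \<open>z \<in> X\<close>] assms(2) by blast
    then have "(x',z) \<in> R'"
      using unchanged \<open>z \<noteq> x\<close> \<open>x' \<noteq> x\<close> by blast
    then show ?thesis
      using swo_trans[OF R'] tied by blast
  next
    case (alone x')
    then have "(x',z) \<in> R'"
      using swo_trans[OF R \<open>(x',x) \<in> R\<close> assms(2)] unchanged \<open>z \<noteq> x\<close> by blast
    then show ?thesis
      using swo_negtrans[OF R' \<open>x' \<in> X\<close> \<open>x \<in> X\<close> \<open>z \<in> X\<close>] alone by blast
  qed
qed

lemma move_up_no_new_losses:
  assumes "move_up X R x R'" "(z,x) \<in> R'"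
  shows "(z,x) \<in> R"
proof -
  have R: "swo X R" and R': "swo X R'" and "x \<in> X"
    and unchanged: "\<forall>a b. a \<noteq> x \<and> b \<noteq> x \<longrightarrow> ((a,b) \<in> R' \<longleftrightarrow> (a,b) \<in> R)"
    using assms(1) unfolding move_up_def by blast+
  have "z \<in> X" "z \<noteq> x"
    using swo_field[OF R' assms(2)] by auto
  from assms(1) show ?thesis
  proof (cases rule: move_up_cases)
    case (tied x')
    then have "(z,x') \<in> R"
      using swo_trans[OF R' assms(2)] unchanged \<open>z \<noteq> x\<close> by blast
    then show ?thesis
      using swo_negtrans[OF R \<open>z \<in> X\<close> \<open>x \<in> X\<close> \<open>x' \<in> X\<close>] tied by blast
  next
    case alone
    then show ?thesis
      using move_up_keeps_wins[OF assms(1)] swo_asym[OF R' assms(2)] \<open>z \<in> X\<close> \<open>z \<noteq> x\<close> by blast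
  qed
qed

lemma vote_move_up:
  assumes "move_up X R x R'"
  shows "vote R x z \<le> vote R' x z"
    and "a \<noteq> x \<Longrightarrow> b \<noteq> x \<Longrightarrow> vote R' a b = vote R a b"
  using move_up_keeps_wins[OF assms] move_up_no_new_losses[OF assms] assms
  by (auto simp: vote_def move_up_def)

lemma margin_move_up:
  assumes "profile V X P" "i \<in> V" "move_up X (P i) x R'"
  shows "margin V P x z \<le> margin V (P(i := R')) x z"
    and "u \<noteq> x \<Longrightarrow> margin V (P(i := R')) u v \<le> margin V P u v"
proof -
  have margin: "margin V (P(i := R')) a b = margin V P a b - vote (P i) a b + vote R' a b" for a b
    using assms(1,2) margin_update_voter[of V i P R'] by (simp add: profile_def)
  show "margin V P x z \<le> margin V (P(i := R')) x z"
    using margin vote_move_up(1)[OF assms(3), of z] by simp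
  show "margin V (P(i := R')) u v \<le> margin V P u v" if "u \<noteq> x"
  proof (cases "v = x")
    case True
    then show ?thesis
      using margin vote_move_up(1)[OF assms(3), of u] vote_antisym[of R' u x] vote_antisym[of "P i" u x]
      by simp
  next
    case False
    then show ?thesis
      using margin vote_move_up(2)[OF assms(3) that] by simp
  qed
qed

text \<open>Moving \<open>x\<close> up only raises the margins of edges leaving \<open>x\<close>, and a path from \<open>y\<close> to \<open>x\<close>
  need not leave \<open>x\<close>.\<close>

lemma sc_monotonicity: "monotonicity sc"
  unfolding monotonicity_def
proof (intro allI impI)
  fix V X P i x y R'
  assume "profile V X P \<and> i \<in> V \<and> move_up X (P i) x R'" and xy: "(x,y) \<in> sc V X P"
  then have P: "profile V X P" "i \<in> V" "move_up X (P i) x R'"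
    by blast+
  let ?P' = "P(i := R')" and ?m = "margin V P x y"
  have "y \<noteq> x" and no_path: "(y,x) \<notin> (threshold_graph V X P ?m)\<^sup>+"
    using xy by (auto simp: sc_iff)
  have "(y,x) \<notin> (threshold_graph V X ?P' ?m)\<^sup>+"
  proof
    assume "(y,x) \<in> (threshold_graph V X ?P' ?m)\<^sup>+"
    then have "(y,x) \<in> {(u,v) \<in> threshold_graph V X ?P' ?m. u \<noteq> x}\<^sup>+"
      using \<open>y \<noteq> x\<close> by (rule trancl_not_leaving_target)
    moreover have "{(u,v) \<in> threshold_graph V X ?P' ?m. u \<noteq> x} \<subseteq> threshold_graph V X P ?m"
    proof clarify
      fix u v
      assume "(u,v) \<in> threshold_graph V X ?P' ?m" "u \<noteq> x"
      then show "(u,v) \<in> threshold_graph V X P ?m"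
        using margin_move_up(2)[OF P, of u v] by (simp add: threshold_graph_def)
    qed
    ultimately show False
      using no_path trancl_mono by blast
  qed
  moreover have "?m \<le> margin V ?P' x y"
    by (rule margin_move_up(1)[OF P])
  ultimately have "(y,x) \<notin> (threshold_graph V X ?P' (margin V ?P' x y))\<^sup>+"
    using trancl_mono_subset[OF threshold_graph_antimono] by blast
  then show "(x,y) \<in> sc V X ?P'"
    using xy \<open>?m \<le> margin V ?P' x y\<close> by (simp add: sc_iff)
qed

lemma coh_reduct_margins:
  assumes "coh_reduct x y V X P V' X' P'" "finite V" "0 < margin V P x y"
  shows "margin V' P' x y = margin V P x y"
    and "threshold_graph V' X' P' (margin V P x y) \<subseteq> threshold_graph V X P (margin V P x y)"
proof -
  let ?m = "margin V P x y"
  have "x \<in> X'" "y \<in> X'" "X' \<subseteq> X" "V' = V"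
    and restrict: "\<forall>i\<in>V. P i \<inter> ({x,y} \<times> {x,y}) = P' i \<inter> ({x,y} \<times> {x,y})"
    and reduced: "\<forall>a\<in>X'. \<forall>b\<in>X'. {a,b} \<noteq> {x,y} \<and> 0 < margin V' P' a b \<longrightarrow> margin V' P' a b \<le> margin V P a b"
    using assms(1) unfolding coh_reduct_def by blast+
  have "vote (P' i) x y = vote (P i) x y" if "i \<in> V" for i
    using vote_eq_if_restrict_eq[of "P i" x y "P' i"] restrict that by simp
  then show xy: "margin V' P' x y = ?m"
    unfolding \<open>V' = V\<close> margin_eq_sum_vote[OF assms(2)] by (rule sum.cong[OF refl])
  show "threshold_graph V' X' P' ?m \<subseteq> threshold_graph V X P ?m"
  proof clarify
    fix u v
    assume "(u,v) \<in> threshold_graph V' X' P' ?m"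
    then have "u \<in> X'" "v \<in> X'" and m: "?m \<le> margin V' P' u v"
      by (auto simp: threshold_graph_def)
    have "(u,v) \<noteq> (y,x)"
      using m xy margin_antisym[of V' P' x y] assms(3) by auto
    then have "(u,v) = (x,y) \<or> {u,v} \<noteq> {x,y}"
      by (auto simp: doubleton_eq_iff)
    then have "?m \<le> margin V P u v"
    proof
      assume "{u,v} \<noteq> {x,y}"
      then have "margin V' P' u v \<le> margin V P u v"
        using reduced \<open>u \<in> X'\<close> \<open>v \<in> X'\<close> m assms(3) by force
      then show ?thesis
        using m by simp
    qed (use xy \<open>V' = V\<close> in simp)
    then show "(u,v) \<in> threshold_graph V X P ?m"
      using \<open>u \<in> X'\<close> \<open>v \<in> X'\<close> \<open>X' \<subseteq> X\<close> by (auto simp: threshold_graph_def)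
  qed
qed

lemma sc_coherent_IIA: "coherent_IIA sc"
  unfolding coherent_IIA_def
proof (intro allI impI)
  fix V X P V' X' P' x y
  assume "profile V X P \<and> profile V' X' P' \<and> coh_reduct x y V X P V' X' P' \<and> (x,y) \<in> sc V X P"
  then have "profile V X P" and reduct: "coh_reduct x y V X P V' X' P'" and xy: "(x,y) \<in> sc V X P"
    by blast+
  then have "finite V" "x \<in> X'" "y \<in> X'"
    by (auto simp: profile_def coh_reduct_def)
  have "0 < margin V P x y" and no_path: "(y,x) \<notin> (threshold_graph V X P (margin V P x y))\<^sup>+"
    using xy by (auto simp: sc_iff)
  then have "(y,x) \<notin> (threshold_graph V' X' P' (margin V P x y))\<^sup>+"
    using coh_reduct_margins(2)[OF reduct \<open>finite V\<close>] trancl_mono by blast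
  then show "(x,y) \<in> sc V' X' P'"
    using coh_reduct_margins(1)[OF reduct \<open>finite V\<close> \<open>0 < margin V P x y\<close>]
      \<open>0 < margin V P x y\<close> \<open>x \<in> X'\<close> \<open>y \<in> X'\<close> by (simp add: sc_iff)
qed

lemma sc_positive_involvement_defeat: "positive_involvement_defeat sc"
  unfolding positive_involvement_defeat_def
proof (intro allI impI notI)
  fix V X P j R x y
  assume a: "profile V X P \<and> j \<notin> V \<and> swo X R \<and> (y,x) \<in> R \<and> (x,y) \<notin> sc V X P"
    and defeat: "(x,y) \<in> sc (insert j V) X (P(j := R))"
  let ?V' = "insert j V" and ?P' = "P(j := R)"
  have margin: "margin ?V' ?P' a b = margin V P a b + vote R a b" for a b
    using a margin_insert_voter[of V j P R] by (simp add: profile_def)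
  have xy: "margin ?V' ?P' x y = margin V P x y - 1"
    using margin swo_asym[of X R y x] a by (simp add: vote_def)
  txt \<open>The new voter lowers the margin of \<open>x\<close> over \<open>y\<close> by one and every other margin by at most one.\<close>
  have "threshold_graph V X P (margin V P x y) \<subseteq> threshold_graph ?V' X ?P' (margin ?V' ?P' x y)"
    using margin xy by (auto simp: threshold_graph_def vote_def)
  moreover have "(y,x) \<in> (threshold_graph V X P (margin V P x y))\<^sup>+"
    using a defeat xy by (auto simp: sc_iff)
  ultimately have "(y,x) \<in> (threshold_graph ?V' X ?P' (margin ?V' ?P' x y))\<^sup>+"
    using trancl_mono by blast
  then show False
    using defeat by (simp add: sc_iff)
qed

text \<open>A cycle of defeats has an edge of least margin, and the rest of the cycle is a path back
  whose edges all have at least that margin.\<close>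

lemma sc_acyclic: "acyclic (sc V X P)"
proof (rule acyclicI, rule allI, rule notI)
  fix a
  assume "(a,a) \<in> (sc V X P)\<^sup>+"
  then obtain u v where uv: "(u,v) \<in> sc V X P"
    and path: "(a,u) \<in> {e \<in> sc V X P. margin V P u v \<le> (case e of (c,d) \<Rightarrow> margin V P c d)}\<^sup>*"
      "(v,a) \<in> {e \<in> sc V X P. margin V P u v \<le> (case e of (c,d) \<Rightarrow> margin V P c d)}\<^sup>*"
    using trancl_bottleneck[of a a "sc V X P" "\<lambda>(c,d). margin V P c d"] by auto
  have "{e \<in> sc V X P. margin V P u v \<le> (case e of (c,d) \<Rightarrow> margin V P c d)}
      \<subseteq> threshold_graph V X P (margin V P u v)"
    by (auto simp: sc_iff threshold_graph_def)
  then have "(v,u) \<in> (threshold_graph V X P (margin V P u v))\<^sup>*"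
    using rtrancl_trans[OF path(2) path(1)] rtrancl_mono by blast
  moreover have "u \<noteq> v"
    using uv by (auto simp: sc_iff)
  ultimately have "(v,u) \<in> (threshold_graph V X P (margin V P u v))\<^sup>+"
    by (simp add: rtrancl_eq_or_trancl)
  then show False
    using uv by (simp add: sc_iff)
qed

lemma sc_availability: "availability sc"
  unfolding availability_def
proof (intro allI impI)
  fix V X P
  assume "profile V X P"
  then have "finite X" "X \<noteq> {}"
    by (auto simp: profile_def)
  have "sc V X P \<subseteq> X \<times> X"
    by (auto simp: sc_iff)
  then have "finite (sc V X P)"
    using \<open>finite X\<close> by (simp add: finite_subset)
  then have "wf (sc V X P)"
    by (rule finite_acyclic_wf[OF _ sc_acyclic])
  moreover obtain x0 where "x0 \<in> X"
    using \<open>X \<noteq> {}\<close> by blast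
  ultimately obtain z where "z \<in> X" "\<forall>y. (y,z) \<in> sc V X P \<longrightarrow> y \<notin> X"
    using wf_eq_minimal[THEN iffD1, rule_format, of "sc V X P" x0 X] by auto
  moreover have "y \<in> X" if "(y,z) \<in> sc V X P" for y
    using that by (simp add: sc_iff)
  ultimately show "\<exists>x\<in>X. \<forall>y. (y,x) \<notin> sc V X P"
    by blast
qed

lemma margin_doubling:
  assumes "finite V" "doubling V P V2 P2"
  shows "margin V2 P2 a b = 2 * margin V P a b"
proof -
  obtain g1 g2 where g: "inj_on g1 V" "inj_on g2 V" "g1 ` V \<inter> g2 ` V = {}"
    "V2 = g1 ` V \<union> g2 ` V" "\<forall>i\<in>V. P2 (g1 i) = P i \<and> P2 (g2 i) = P i"
    using assms(2) unfolding doubling_def by blast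
  have "margin V2 P2 a b = (\<Sum>i\<in>g1 ` V. vote (P2 i) a b) + (\<Sum>i\<in>g2 ` V. vote (P2 i) a b)"
    using assms(1) g by (simp add: margin_eq_sum_vote sum.union_disjoint)
  also have "\<dots> = 2 * margin V P a b"
    using assms(1) g by (simp add: margin_eq_sum_vote sum.reindex)
  finally show ?thesis .
qed

lemma sc_doubling:
  assumes "profile V X P" "doubling V P V2 P2"
  shows "sc V2 X P2 = sc V X P"
proof -
  have margin: "margin V2 P2 a b = 2 * margin V P a b" for a b
    using assms margin_doubling[of V P V2 P2] by (simp add: profile_def)
  then have "threshold_graph V2 X P2 (2 * k) = threshold_graph V X P k" for k
    by (auto simp: threshold_graph_def)
  then show ?thesis
    by (auto simp: sc_iff margin)
qed

lemma sc_homogeneity: "homogeneity sc"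
  unfolding homogeneity_def using sc_doubling by blast

lemma sc_downward_homogeneity: "downward_homogeneity sc"
  unfolding downward_homogeneity_def using sc_doubling by blast

section \<open>Split Cycle defeats are forced\<close>

lemma positive_involvement_copies:
  fixes f :: "('v,'c) vccr"
  assumes "infinite (UNIV :: 'v set)" "positive_involvement_defeat f" "swo X L" "(y,x) \<in> L"
    and "profile V X P" "(x,y) \<notin> f V X P"
  shows "\<exists>V' P'. profile V' X P' \<and> (\<forall>a b. margin V' P' a b = margin V P a b + int k * vote L a b)
    \<and> (x,y) \<notin> f V' X P'"
  using assms(5,6)
proof (induction k arbitrary: V P)
  case 0
  then show ?case
    by auto
next
  case (Suc k)
  have "finite V"
    using Suc.prems(1) by (simp add: profile_def)
  then obtain j where "j \<notin> V"
    using assms(1) ex_new_if_finite by blast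
  let ?V = "insert j V" and ?P = "P(j := L)"
  have "profile ?V X ?P"
    using profile_insert_voter[OF Suc.prems(1) \<open>j \<notin> V\<close> assms(3)] .
  moreover have "(x,y) \<notin> f ?V X ?P"
    using assms(2-4) Suc.prems \<open>j \<notin> V\<close> unfolding positive_involvement_defeat_def by blast
  ultimately obtain V' P' where "profile V' X P'" "(x,y) \<notin> f V' X P'"
    "\<forall>a b. margin V' P' a b = margin ?V ?P a b + int k * vote L a b"
    using Suc.IH by blast
  then show ?case
    using margin_insert_voter[OF \<open>finite V\<close> \<open>j \<notin> V\<close>, of P L] by (auto simp: algebra_simps)
qed

text \<open>Used with \<open>A\<close> the set of candidates reachable from \<open>y\<close> along edges of margin at least
  \<open>margin x y\<close>.\<close>

definition reinforcing_ballot :: "'c set \<Rightarrow> 'c set \<Rightarrow> 'c \<Rightarrow> 'c \<Rightarrow> ('c \<times> 'c) set" where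
  "reinforcing_ballot X A x y =
     rank_order X (\<lambda>z. if z \<in> A then (if z = y then 2 else 0) else if z = x then 1 else 3)"

lemma vote_reinforcing_ballot:
  assumes "u \<in> X" "v \<in> X" "u \<in> A" "v \<notin> A"
  shows "vote (reinforcing_ballot X A x y) u v = (if u = y \<and> v = x then 1 else -1)"
  using assms by (auto simp: vote_def reinforcing_ballot_def rank_order_def)

lemma reinforced_reach_set_closed:
  assumes "(x,y) \<in> sc V X P"
    and A: "A = (threshold_graph V X P (margin V P x y))\<^sup>* `` {y}"
    and margin: "\<forall>a b. margin V' P' a b =
      margin V P a b + (margin V P x y - 1) * vote (reinforcing_ballot X A x y) a b"
  shows "threshold_graph V' X P' 1 `` A \<subseteq> A"
proof clarify
  let ?m = "margin V P x y"
  fix u v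
  assume uv: "(u,v) \<in> threshold_graph V' X P' 1" and "u \<in> A"
  have "u \<in> X" "v \<in> X" and "1 \<le> margin V' P' u v"
    using uv by (auto simp: threshold_graph_def)
  show "v \<in> A"
  proof (rule ccontr)
    assume "v \<notin> A"
    have "margin V P u v < ?m"
    proof (rule ccontr)
      assume "\<not> margin V P u v < ?m"
      then have "(u,v) \<in> threshold_graph V X P ?m"
        using \<open>u \<in> X\<close> \<open>v \<in> X\<close> by (simp add: threshold_graph_def)
      with \<open>u \<in> A\<close> have "v \<in> A"
        unfolding A Image_singleton_iff by (rule rtrancl.rtrancl_into_rtrancl)
      then show False
        using \<open>v \<notin> A\<close> by blast
    qed
    moreover have "margin V P y x = - ?m"
      by (rule margin_antisym)
    ultimately show False
      using \<open>1 \<le> margin V' P' u v\<close> margin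
        vote_reinforcing_ballot[OF \<open>u \<in> X\<close> \<open>v \<in> X\<close> \<open>u \<in> A\<close> \<open>v \<notin> A\<close>, of x y]
      by (cases "u = y \<and> v = x") auto
  qed
qed

lemma sc_subset_defeats:
  fixes f :: "('v,'c) vccr"
  assumes "infinite (UNIV :: 'v set)" "coherent_defeat f" "positive_involvement_defeat f"
    and "profile V X P" "(x,y) \<in> sc V X P"
  shows "(x,y) \<in> f V X P"
proof (rule ccontr)
  assume "(x,y) \<notin> f V X P"
  let ?m = "margin V P x y"
  have "x \<in> X" "y \<in> X" "0 < ?m" and no_path: "(y,x) \<notin> (threshold_graph V X P ?m)\<^sup>+"
    using assms(5) by (auto simp: sc_iff)
  define A where "A = (threshold_graph V X P ?m)\<^sup>* `` {y}"
  have "y \<in> A" "x \<notin> A"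
    using no_path \<open>0 < ?m\<close> by (auto simp: A_def rtrancl_eq_or_trancl)
  let ?L = "reinforcing_ballot X A x y"
  have "(y,x) \<in> ?L"
    using \<open>y \<in> X\<close> \<open>x \<in> X\<close> \<open>y \<in> A\<close> \<open>x \<notin> A\<close>
    by (simp add: reinforcing_ballot_def rank_order_def)
  then obtain V' P' where "profile V' X P'" "(x,y) \<notin> f V' X P'"
    and margin: "\<forall>a b. margin V' P' a b = margin V P a b + (?m - 1) * vote ?L a b"
    using positive_involvement_copies[OF assms(1,3) _ _ assms(4) \<open>(x,y) \<notin> f V X P\<close>, of ?L "nat (?m - 1)"]
      \<open>0 < ?m\<close> by (auto simp: reinforcing_ballot_def swo_rank_order)
  have "(y,x) \<notin> (threshold_graph V' X P' 1)\<^sup>+"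
    by (rule not_trancl_leaving_closed[OF reinforced_reach_set_closed[OF assms(5) A_def margin]
          \<open>y \<in> A\<close> \<open>x \<notin> A\<close>])
  moreover have "margin V' P' x y = 1"
    using margin vote_reinforcing_ballot[of y X x A x y] \<open>y \<in> X\<close> \<open>x \<in> X\<close> \<open>y \<in> A\<close> \<open>x \<notin> A\<close>
    by (simp add: vote_antisym[of _ x y])
  ultimately have "(x,y) \<in> f V' X P'"
    using assms(2) \<open>profile V' X P'\<close> \<open>x \<in> X\<close> \<open>y \<in> X\<close>
    unfolding coherent_defeat_def majority_path_iff_trancl by simp
  then show False
    using \<open>(x,y) \<notin> f V' X P'\<close> by blast
qed

section \<open>Rearranging and padding voters\<close>

lemma fiber_preserving_bij:
  assumes "finite A" "finite B" "\<And>k. card {a\<in>A. g a = k} = card {b\<in>B. h b = k}"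
  obtains \<tau> where "bij_betw \<tau> A B" "\<forall>a\<in>A. h (\<tau> a) = g a"
proof -
  have "\<exists>\<phi>. bij_betw \<phi> {a\<in>A. g a = k} {b\<in>B. h b = k}" for k
    using assms by (intro finite_same_card_bij) auto
  then obtain \<phi> where \<phi>: "\<And>k. bij_betw (\<phi> k) {a\<in>A. g a = k} {b\<in>B. h b = k}"
    by metis
  define \<tau> where "\<tau> a = \<phi> (g a) a" for a
  have fiber: "bij_betw \<tau> {a\<in>A. g a = k} {b\<in>B. h b = k}" for k
    using bij_betw_cong[of "{a\<in>A. g a = k}" \<tau> "\<phi> k"] \<phi> by (simp add: \<tau>_def)
  then have "bij_betw \<tau> (\<Union>k. {a\<in>A. g a = k}) (\<Union>k. {b\<in>B. h b = k})"
    by (intro bij_betw_UNION_disjoint) (auto simp: disjoint_family_on_def)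
  moreover have "(\<Union>k. {a\<in>A. g a = k}) = A" "(\<Union>k. {b\<in>B. h b = k}) = B"
    by auto
  moreover have "h (\<tau> a) = g a" if "a \<in> A" for a
    using fiber[of "g a"] that by (auto simp: bij_betw_def)
  ultimately show thesis
    using that by auto
qed

lemma sign_counts:
  fixes g :: "'a \<Rightarrow> int"
  assumes "finite A" "\<forall>a\<in>A. \<bar>g a\<bar> \<le> 1"
  shows "(\<Sum>a\<in>A. g a) = int (card {a\<in>A. g a = 1}) - int (card {a\<in>A. g a = -1})"
    and "(\<Sum>a\<in>A. \<bar>g a\<bar>) = int (card {a\<in>A. g a = 1}) + int (card {a\<in>A. g a = -1})"
    and "int (card A) = int (card {a\<in>A. g a = 1}) + int (card {a\<in>A. g a = -1}) + int (card {a\<in>A. g a = 0})"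
proof -
  have "g a = of_bool (g a = 1) - of_bool (g a = -1)"
    and "\<bar>g a\<bar> = of_bool (g a = 1) + of_bool (g a = -1)"
    and "1 = of_bool (g a = 1) + of_bool (g a = -1) + (of_bool (g a = 0) :: int)" if "a \<in> A" for a
    using assms(2) that by auto
  then have "(\<Sum>a\<in>A. g a) = (\<Sum>a\<in>A. of_bool (g a = 1) - of_bool (g a = -1))"
    and "(\<Sum>a\<in>A. \<bar>g a\<bar>) = (\<Sum>a\<in>A. of_bool (g a = 1) + of_bool (g a = -1))"
    and "(\<Sum>a\<in>A. 1) = (\<Sum>a\<in>A. of_bool (g a = 1) + of_bool (g a = -1) + (of_bool (g a = 0) :: int))"
    by (auto intro: sum.cong)
  then show "(\<Sum>a\<in>A. g a) = int (card {a\<in>A. g a = 1}) - int (card {a\<in>A. g a = -1})"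
    and "(\<Sum>a\<in>A. \<bar>g a\<bar>) = int (card {a\<in>A. g a = 1}) + int (card {a\<in>A. g a = -1})"
    and "int (card A) = int (card {a\<in>A. g a = 1}) + int (card {a\<in>A. g a = -1}) + int (card {a\<in>A. g a = 0})"
    using assms(1) by (simp_all add: sum.distrib sum_subtractf Collect_conj_eq Int_commute)
qed

lemma sign_fibers_card_eq:
  fixes g :: "'a \<Rightarrow> int" and h :: "'b \<Rightarrow> int"
  assumes "finite A" "finite B" "\<forall>a\<in>A. \<bar>g a\<bar> \<le> 1" "\<forall>b\<in>B. \<bar>h b\<bar> \<le> 1" "card A = card B"
    and "(\<Sum>a\<in>A. g a) = (\<Sum>b\<in>B. h b)" "(\<Sum>a\<in>A. \<bar>g a\<bar>) = (\<Sum>b\<in>B. \<bar>h b\<bar>)"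
  shows "card {a\<in>A. g a = k} = card {b\<in>B. h b = k}"
proof (cases "k \<in> {-1, 0, 1}")
  case True
  then show ?thesis
    using sign_counts[OF assms(1,3)] sign_counts[OF assms(2,4)] assms(5-7) by auto
next
  case False
  then have empty: "{a\<in>A. g a = k} = {}" "{b\<in>B. h b = k} = {}"
    using assms(3,4) by force+
  show ?thesis
    unfolding empty by simp
qed

lemma bij_betw_map_sum_id:
  assumes "bij_betw f A A"
  shows "bij_betw (map_sum f id) (A <+> B) (A <+> B)"
proof -
  have "inj_on (map_sum f id) (A <+> B)"
  proof (rule inj_onI)
    fix p q
    assume "p \<in> A <+> B" "q \<in> A <+> B" "map_sum f id p = map_sum f id q"
    then show "p = q"
      using inj_onD[OF bij_betw_imp_inj_on[OF assms]] by (auto elim!: PlusE)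
  qed
  moreover have "Inl a \<in> map_sum f id ` (A <+> B)" if "a \<in> A" for a
  proof -
    obtain a' where "a' \<in> A" "a = f a'"
      using assms \<open>a \<in> A\<close> by (auto simp: bij_betw_def)
    then show ?thesis
      by (intro image_eqI[of _ _ "Inl a'"]) auto
  qed
  moreover have "Inr b \<in> map_sum f id ` (A <+> B)" if "b \<in> B" for b
    using that by (intro image_eqI[of _ _ "Inr b"]) auto
  ultimately show ?thesis
    using assms unfolding bij_betw_def by (auto elim!: PlusE)
qed

lemma bij_betw_conjugate:
  assumes "bij_betw \<tau> W I" "bij_betw \<rho> I I"
  shows "bij_betw (\<lambda>i. inv_into W \<tau> (\<rho> (\<tau> i))) W W"
    and "i \<in> W \<Longrightarrow> \<tau> (inv_into W \<tau> (\<rho> (\<tau> i))) = \<rho> (\<tau> i)"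
proof -
  show "bij_betw (\<lambda>i. inv_into W \<tau> (\<rho> (\<tau> i))) W W"
    using bij_betw_trans[OF bij_betw_trans[OF assms] bij_betw_inv_into[OF assms(1)]]
    by (simp add: comp_def)
  show "\<tau> (inv_into W \<tau> (\<rho> (\<tau> i))) = \<rho> (\<tau> i)" if "i \<in> W"
  proof (rule f_inv_into_f)
    show "\<rho> (\<tau> i) \<in> \<tau> ` W"
      using assms that by (auto simp: bij_betw_def)
  qed
qed

lemma transported_profile:
  assumes "bij_betw \<tau> W I" "finite W" "W \<noteq> {}" "finite Y" "Y \<noteq> {}" "\<And>\<iota>. swo Y (\<beta> \<iota>)"
  shows "profile W Y (\<lambda>i. if i \<in> W then \<beta> (\<tau> i) else {})"
    and "margin W (\<lambda>i. if i \<in> W then \<beta> (\<tau> i) else {}) a c = (\<Sum>\<iota>\<in>I. vote (\<beta> \<iota>) a c)"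
proof -
  show "profile W Y (\<lambda>i. if i \<in> W then \<beta> (\<tau> i) else {})"
    using assms(2-6) by (simp add: profile_def)
  have "margin W (\<lambda>i. if i \<in> W then \<beta> (\<tau> i) else {}) a c = (\<Sum>i\<in>W. vote (\<beta> (\<tau> i)) a c)"
    unfolding margin_eq_sum_vote[OF assms(2)] by (intro sum.cong) simp_all
  also have "\<dots> = (\<Sum>\<iota>\<in>I. vote (\<beta> \<iota>) a c)"
    by (rule sum.reindex_bij_betw[OF assms(1)])
  finally show "margin W (\<lambda>i. if i \<in> W then \<beta> (\<tau> i) else {}) a c = (\<Sum>\<iota>\<in>I. vote (\<beta> \<iota>) a c)" .
qed

lemma defeat_symmetric_profile:
  fixes f :: "('v,'c) vccr"
  assumes "anonymity f" "neutrality f" "profile V X P" "bij_betw \<pi> X X" "bij_betw \<sigma> V V"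
    and sym: "\<forall>i\<in>V. \<forall>a\<in>X. \<forall>b\<in>X. (a,b) \<in> P i \<longleftrightarrow> (\<pi> a, \<pi> b) \<in> P (\<sigma> i)"
    and "a \<in> X" "b \<in> X" "(a,b) \<in> f V X P"
  shows "(\<pi> a, \<pi> b) \<in> f V X P"
proof -
  define P' where "P' i = (if i \<in> V then P (\<sigma> i) else {})" for i
  have "\<sigma> i \<in> V" if "i \<in> V" for i
    using assms(5) that by (auto simp: bij_betw_def)
  then have "profile V X P'"
    using assms(3) by (auto simp: profile_def P'_def)
  then have "f V X P = f V X P'"
    using assms(1)[unfolded anonymity_def, rule_format, of V X P P' \<sigma>] assms(3,5)
    by (simp add: P'_def)
  moreover have "(a,b) \<in> f V X P \<longleftrightarrow> (\<pi> a, \<pi> b) \<in> f V X P'"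
    using assms(2)[unfolded neutrality_def, rule_format, of V X P P' \<pi>] \<open>profile V X P'\<close>
      assms(3,4) sym \<open>a \<in> X\<close> \<open>b \<in> X\<close>
    by (simp add: P'_def)
  ultimately show ?thesis
    using \<open>(a,b) \<in> f V X P\<close> by simp
qed

lemma add_reversal_pair:
  fixes f :: "('v,'c) vccr"
  assumes "infinite (UNIV :: 'v set)" "neutral_reversal f" "swo X R" "profile V X P"
  obtains V' P' where "profile V' X P'" "f V' X P' = f V X P"
    "\<And>F :: ('c \<times> 'c) set \<Rightarrow> int. (\<Sum>i\<in>V'. F (P' i)) = (\<Sum>i\<in>V. F (P i)) + (F R + F (R\<inverse>))"
proof -
  have "finite V"
    using assms(4) by (simp add: profile_def)
  then obtain j where "j \<notin> V"
    using assms(1) ex_new_if_finite by blast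
  obtain k where "k \<notin> insert j V"
    using assms(1) \<open>finite V\<close> ex_new_if_finite[of "insert j V"] by blast
  let ?V = "insert j (insert k V)" and ?P = "P(j := R, k := R\<inverse>)"
  have P: "?P = (P(k := R\<inverse>))(j := R)"
    using \<open>k \<notin> insert j V\<close> fun_upd_twist[of j k P R "R\<inverse>"] by auto
  show thesis
  proof (rule that)
    show "profile ?V X ?P"
      unfolding P using \<open>j \<notin> V\<close> \<open>k \<notin> insert j V\<close> assms(3,4)
      by (intro profile_insert_voter swo_converse) auto
    show "f ?V X ?P = f V X P"
      using assms(2)[unfolded neutral_reversal_def, rule_format, of V X P j k R] assms(3,4)
        \<open>j \<notin> V\<close> \<open>k \<notin> insert j V\<close> by auto
    fix F :: "('c \<times> 'c) set \<Rightarrow> int"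
    have "(\<Sum>i\<in>?V. F (?P i)) = F (?P j) + (F (?P k) + (\<Sum>i\<in>V. F (?P i)))"
      using \<open>finite V\<close> \<open>j \<notin> V\<close> \<open>k \<notin> insert j V\<close> by (simp only: sum.insert finite_insert insert_iff) auto
    moreover have "(\<Sum>i\<in>V. F (?P i)) = (\<Sum>i\<in>V. F (P i))"
      using \<open>j \<notin> V\<close> \<open>k \<notin> insert j V\<close> by (intro sum.cong) auto
    ultimately show "(\<Sum>i\<in>?V. F (?P i)) = (\<Sum>i\<in>V. F (P i)) + (F R + F (R\<inverse>))"
      using \<open>k \<notin> insert j V\<close> by auto
  qed
qed

lemma neutral_reversal_pairs:
  fixes f :: "('v,'c) vccr"
  assumes "infinite (UNIV :: 'v set)" "neutral_reversal f" "swo X R" "profile V X P"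
  shows "\<exists>V' P'. profile V' X P' \<and> f V' X P' = f V X P \<and>
    (\<forall>F :: ('c \<times> 'c) set \<Rightarrow> int. (\<Sum>i\<in>V'. F (P' i)) = (\<Sum>i\<in>V. F (P i)) + int k * (F R + F (R\<inverse>)))"
  using assms(4)
proof (induction k arbitrary: V P)
  case 0
  then show ?case
    by auto
next
  case (Suc k)
  obtain V1 P1 where "profile V1 X P1" "f V1 X P1 = f V X P"
    and "\<And>F :: ('c \<times> 'c) set \<Rightarrow> int. (\<Sum>i\<in>V1. F (P1 i)) = (\<Sum>i\<in>V. F (P i)) + (F R + F (R\<inverse>))"
    using add_reversal_pair[OF assms(1-3) Suc.prems] by blast
  moreover obtain V' P' where "profile V' X P'" "f V' X P' = f V1 X P1"
    and "\<forall>F :: ('c \<times> 'c) set \<Rightarrow> int. (\<Sum>i\<in>V'. F (P' i)) = (\<Sum>i\<in>V1. F (P1 i)) + int k * (F R + F (R\<inverse>))"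
    using Suc.IH[OF \<open>profile V1 X P1\<close>] by blast
  ultimately show ?case
    by (intro exI[of _ V'] exI[of _ P']) (simp add: algebra_simps)
qed

lemma padded_profile:
  fixes f :: "('v,'c) vccr"
  assumes "infinite (UNIV :: 'v set)" "neutral_reversal f" "profile V X P" "x \<in> X" "y \<in> X" "x \<noteq> y"
  obtains V' P' where "profile V' X P'" "f V' X P' = f V X P" "\<And>a b. margin V' P' a b = margin V P a b"
    "card V' = card V + 2 * p + 2 * t"
    "(\<Sum>i\<in>V'. \<bar>vote (P' i) x y\<bar>) = (\<Sum>i\<in>V. \<bar>vote (P i) x y\<bar>) + 2 * int p"
proof -
  let ?R = "rank_order X (\<lambda>z. of_bool (z = x))"
  obtain V1 P1 where "profile V1 X P1" "f V1 X P1 = f V X P"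
    and sum1: "\<forall>F :: ('c \<times> 'c) set \<Rightarrow> int. (\<Sum>i\<in>V1. F (P1 i)) = (\<Sum>i\<in>V. F (P i)) + int p * (F ?R + F (?R\<inverse>))"
    using neutral_reversal_pairs[OF assms(1,2) swo_rank_order assms(3), where k = p] by blast
  obtain V2 P2 where "profile V2 X P2" "f V2 X P2 = f V X P"
    and sum2: "\<forall>F :: ('c \<times> 'c) set \<Rightarrow> int. (\<Sum>i\<in>V2. F (P2 i)) = (\<Sum>i\<in>V1. F (P1 i)) + int t * (F {} + F ({}\<inverse>))"
    using neutral_reversal_pairs[OF assms(1,2) swo_empty \<open>profile V1 X P1\<close>, where k = t]
      \<open>f V1 X P1 = f V X P\<close> by auto
  have "finite V" "finite V2"
    using assms(3) \<open>profile V2 X P2\<close> by (simp_all add: profile_def)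
  show thesis
  proof (rule that[OF \<open>profile V2 X P2\<close> \<open>f V2 X P2 = f V X P\<close>])
    show "margin V2 P2 a b = margin V P a b" for a b
      using sum1[rule_format, of "\<lambda>R. vote R a b"] sum2[rule_format, of "\<lambda>R. vote R a b"]
        \<open>finite V\<close> \<open>finite V2\<close> by (simp add: margin_eq_sum_vote)
    show "card V2 = card V + 2 * p + 2 * t"
      using sum1[rule_format, of "\<lambda>_. 1"] sum2[rule_format, of "\<lambda>_. 1"] by simp
    have "\<bar>vote ?R x y\<bar> = 1"
      using assms(4-6) by (simp add: vote_def rank_order_def)
    then show "(\<Sum>i\<in>V2. \<bar>vote (P2 i) x y\<bar>) = (\<Sum>i\<in>V. \<bar>vote (P i) x y\<bar>) + 2 * int p"
      using sum1[rule_format, of "\<lambda>R. \<bar>vote R x y\<bar>"] sum2[rule_format, of "\<lambda>R. \<bar>vote R x y\<bar>"] by simp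
  qed
qed

section \<open>Defeats have positive margin\<close>

definition restrict_ballots :: "'v set \<Rightarrow> 'c set \<Rightarrow> ('v \<Rightarrow> ('c \<times> 'c) set) \<Rightarrow> 'v \<Rightarrow> ('c \<times> 'c) set" where
  "restrict_ballots V Y P i = (if i \<in> V then P i \<inter> (Y \<times> Y) else {})"

lemma defeat_restrict_pair:
  fixes f :: "('v,'c) vccr"
  assumes "coherent_IIA f" "profile V X P" "x \<in> X" "y \<in> X" "(x,y) \<in> f V X P"
  defines "Q \<equiv> restrict_ballots V {x,y} P"
  shows "profile V {x,y} Q" "(x,y) \<in> f V {x,y} Q" "margin V Q x y = margin V P x y"
proof -
  show "profile V {x,y} Q"
    using assms(2-4) swo_restrict[of X _ "{x,y}"] by (auto simp: profile_def Q_def restrict_ballots_def)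
  have restrict: "P i \<inter> ({x,y} \<times> {x,y}) = Q i \<inter> ({x,y} \<times> {x,y})" if "i \<in> V" for i
    using that by (auto simp: Q_def restrict_ballots_def)
  then have "coh_reduct x y V X P V {x,y} Q"
    using assms(3,4) by (auto simp: coh_reduct_def)
  then show "(x,y) \<in> f V {x,y} Q"
    using assms(1,2,5) \<open>profile V {x,y} Q\<close> unfolding coherent_IIA_def by blast
  have "finite V"
    using assms(2) by (simp add: profile_def)
  then show "margin V Q x y = margin V P x y"
    unfolding margin_eq_sum_vote[OF \<open>finite V\<close>]
    using vote_eq_if_restrict_eq[OF restrict] by (intro sum.cong) auto
qed

lemma reversed_pair_ballot:
  assumes "swo {x,y} R" "swo {x,y} R'" "vote R' x y = - vote R x y" "a \<in> {x,y}" "b \<in> {x,y}"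
  shows "(a,b) \<in> R \<longleftrightarrow> (if a = x then y else x, if b = x then y else x) \<in> R'"
proof -
  consider "a = b" | "a = x" "b = y" "x \<noteq> y" | "a = y" "b = x" "x \<noteq> y"
    using assms(4,5) by auto
  then show ?thesis
  proof cases
    case 1
    then show ?thesis
      using swo_field[OF assms(1)] swo_field[OF assms(2)] by auto
  next
    case 2
    then show ?thesis
      using assms(3)
      by (simp add: vote_eq_1_iff[OF assms(1), symmetric] vote_eq_minus_1_iff[OF assms(2), symmetric])
  next
    case 3
    then show ?thesis
      using assms(3)
      by (simp add: vote_eq_minus_1_iff[OF assms(1), symmetric] vote_eq_1_iff[OF assms(2), symmetric])
  qed
qed

lemma balanced_pair_symmetry:
  assumes "profile V {x,y} Q" "margin V Q x y = 0"
  obtains \<sigma> where "bij_betw \<sigma> V V"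
    "\<forall>i\<in>V. \<forall>a\<in>{x,y}. \<forall>b\<in>{x,y}. (a,b) \<in> Q i \<longleftrightarrow> (if a = x then y else x, if b = x then y else x) \<in> Q (\<sigma> i)"
proof -
  have "finite V" and swo: "\<forall>i\<in>V. swo {x,y} (Q i)"
    using assms(1) by (auto simp: profile_def)
  have "card {i\<in>V. - vote (Q i) x y = k} = card {i\<in>V. vote (Q i) x y = k}" for k
    using assms(2) \<open>finite V\<close>
    by (intro sign_fibers_card_eq) (simp_all add: margin_eq_sum_vote sum_negf vote_bounded)
  then obtain \<sigma> where \<sigma>: "bij_betw \<sigma> V V" "\<forall>i\<in>V. vote (Q (\<sigma> i)) x y = - vote (Q i) x y"
    by (rule fiber_preserving_bij[OF \<open>finite V\<close> \<open>finite V\<close>])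
  show thesis
  proof (rule that[OF \<sigma>(1)], intro ballI)
    fix i a b
    assume "i \<in> V" "a \<in> {x,y}" "b \<in> {x,y}"
    moreover have "swo {x,y} (Q (\<sigma> i))"
      using swo \<sigma>(1) \<open>i \<in> V\<close> by (auto simp: bij_betw_def)
    ultimately show "(a,b) \<in> Q i \<longleftrightarrow> (if a = x then y else x, if b = x then y else x) \<in> Q (\<sigma> i)"
      using reversed_pair_ballot[of x y "Q i" "Q (\<sigma> i)" a b] swo \<sigma>(2) by simp
  qed
qed

lemma two_candidate_defeat_margin_pos:
  fixes f :: "('v,'c) vccr"
  assumes "is_vccr f" "anonymity f" "neutrality f" "coherent_defeat f"
    and "profile V {x,y} Q" "(x,y) \<in> f V {x,y} Q"
  shows "0 < margin V Q x y"
proof (rule ccontr)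
  assume "\<not> 0 < margin V Q x y"
  have asym: "(y,x) \<notin> f V {x,y} Q"
    using assms(1,5,6) unfolding is_vccr_def by blast
  then have "x \<noteq> y"
    using assms(6) by blast
  consider "margin V Q x y < 0" | "margin V Q x y = 0"
    using \<open>\<not> 0 < margin V Q x y\<close> by linarith
  then show False
  proof cases
    case 1
    have "(x,b) \<notin> threshold_graph V {x,y} Q 1" for b
      using 1 by (auto simp: threshold_graph_def)
    then have "(x,y) \<notin> (threshold_graph V {x,y} Q 1)\<^sup>+"
      by (meson tranclD)
    then have "(y,x) \<in> f V {x,y} Q"
      using assms(4,5) 1 margin_antisym[of V Q x y]
      unfolding coherent_defeat_def majority_path_iff_trancl by simp
    then show False
      using asym by blast
  next
    case 2
    let ?\<pi> = "\<lambda>z. if z = x then y else x"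
    obtain \<sigma> where "bij_betw \<sigma> V V"
      "\<forall>i\<in>V. \<forall>a\<in>{x,y}. \<forall>b\<in>{x,y}. (a,b) \<in> Q i \<longleftrightarrow> (?\<pi> a, ?\<pi> b) \<in> Q (\<sigma> i)"
      using balanced_pair_symmetry[OF assms(5) 2] by blast
    moreover have "bij_betw ?\<pi> {x,y} {x,y}"
      by (auto simp: bij_betw_def inj_on_def)
    ultimately have "(?\<pi> x, ?\<pi> y) \<in> f V {x,y} Q"
      using defeat_symmetric_profile[OF assms(2,3,5)] assms(6) by blast
    then show False
      using asym \<open>x \<noteq> y\<close> by simp
  qed
qed

lemma defeat_margin_pos:
  fixes f :: "('v,'c) vccr"
  assumes "is_vccr f" "anonymity f" "neutrality f" "coherent_IIA f" "coherent_defeat f"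
    and "profile V X P" "(x,y) \<in> f V X P"
  shows "0 < margin V P x y"
proof -
  have "x \<in> X" "y \<in> X"
    using assms(1,6,7) unfolding is_vccr_def by blast+
  with defeat_restrict_pair[OF assms(4,6) _ _ assms(7)] show ?thesis
    using two_candidate_defeat_margin_pos[OF assms(1-3,5)] by metis
qed

section \<open>Rotation-invariant cyclic profiles\<close>

locale cycle =
  fixes cs :: "'c list"
  assumes distinct: "distinct cs" and long: "3 \<le> length cs"
begin

definition next_index :: "nat \<Rightarrow> nat" where
  "next_index j = (if Suc j = length cs then 0 else Suc j)"

lemma not_Nil: "cs \<noteq> []"
  using long by auto

lemma next_index_less: "j < length cs \<Longrightarrow> next_index j < length cs"
  using not_Nil by (simp add: next_index_def)

lemma next_index_eq_iff: "u < length cs \<Longrightarrow> v < length cs \<Longrightarrow> next_index u = next_index v \<longleftrightarrow> u = v"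
  by (auto simp: next_index_def)

lemma next_index_neq: "next_index j \<noteq> j"
  using long by (auto simp: next_index_def)

lemma bij_next_index: "bij_betw next_index {..<length cs} {..<length cs}"
proof -
  have "inj_on next_index {..<length cs}"
    by (auto simp: inj_on_def next_index_eq_iff)
  moreover have "next_index ` {..<length cs} \<subseteq> {..<length cs}"
    using next_index_less by auto
  ultimately show ?thesis
    using endo_inj_surj[of "{..<length cs}" next_index] by (simp add: bij_betw_def)
qed

lemma successively_cycle_iff:
  "successively Q (cs @ [hd cs]) \<longleftrightarrow> (\<forall>j<length cs. Q (cs!j) (cs!next_index j))"
proof -
  have "(cs @ [hd cs]) ! Suc j = cs ! next_index j" if "j < length cs" for j
    using that not_Nil by (auto simp: next_index_def nth_append hd_conv_nth)
  then show ?thesis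
    unfolding successively_conv_nth by (auto simp: nth_append)
qed

definition shift :: "'c \<Rightarrow> 'c" where
  "shift z = cs ! next_index (the_inv_into {..<length cs} ((!) cs) z)"

lemma shift_nth: "j < length cs \<Longrightarrow> shift (cs!j) = cs ! next_index j"
  using distinct by (simp add: shift_def the_inv_into_f_f inj_on_nth)

lemma nth_eq_iff: "u < length cs \<Longrightarrow> v < length cs \<Longrightarrow> cs!u = cs!v \<longleftrightarrow> u = v"
  using distinct by (simp add: nth_eq_iff_index_eq)

lemma bij_shift: "bij_betw shift (set cs) (set cs)"
proof -
  have "inj_on shift (set cs)"
    by (auto simp: inj_on_def in_set_conv_nth shift_nth next_index_less nth_eq_iff next_index_eq_iff)
  moreover have "shift z \<in> set cs" if "z \<in> set cs" for z
    using that next_index_less by (auto simp: in_set_conv_nth[of z] shift_nth)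
  then have "shift ` set cs \<subseteq> set cs"
    by blast
  ultimately show ?thesis
    using endo_inj_surj[of "set cs" shift] by (simp add: bij_betw_def)
qed

lemma shift_eq_nth_iff: "z \<in> set cs \<Longrightarrow> j < length cs \<Longrightarrow> shift z = cs ! next_index j \<longleftrightarrow> z = cs!j"
  by (auto simp: in_set_conv_nth shift_nth next_index_less nth_eq_iff next_index_eq_iff)

definition edge_ballot :: "nat \<Rightarrow> ('c \<times> 'c) set" where
  "edge_ballot j =
     rank_order (set cs) (\<lambda>z. if z = cs!j then 2 else if z = cs ! next_index j then 1 else 0)"

definition leader_ballot :: "nat \<Rightarrow> ('c \<times> 'c) set" where
  "leader_ballot j = rank_order (set cs) (\<lambda>z. of_bool (z = cs!j))"

lemma edge_ballot_shift:
  assumes "j < length cs" "a \<in> set cs" "b \<in> set cs"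
  shows "(a,b) \<in> edge_ballot j \<longleftrightarrow> (shift a, shift b) \<in> edge_ballot (next_index j)"
  unfolding edge_ballot_def using assms bij_betw_apply[OF bij_shift]
  by (intro rank_order_equivariant) (auto simp: shift_eq_nth_iff next_index_less)

lemma leader_ballot_shift:
  assumes "j < length cs" "a \<in> set cs" "b \<in> set cs"
  shows "(a,b) \<in> leader_ballot j \<longleftrightarrow> (shift a, shift b) \<in> leader_ballot (next_index j)"
  unfolding leader_ballot_def using assms bij_betw_apply[OF bij_shift]
  by (intro rank_order_equivariant) (auto simp: shift_eq_nth_iff)

lemma vote_edge_ballot:
  assumes "u < length cs" "v < length cs" "u \<noteq> v" "j < length cs"
  shows "vote (edge_ballot j) (cs!u) (cs!v) = of_bool (u = j) + of_bool (u = next_index j \<and> v \<noteq> j)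
    - of_bool (v = j) - of_bool (v = next_index j \<and> u \<noteq> j)"
  using assms next_index_less[OF assms(4)] next_index_neq[of j]
  by (auto simp: vote_def edge_ballot_def rank_order_def nth_eq_iff)

lemma vote_leader_ballot:
  assumes "u < length cs" "v < length cs" "u \<noteq> v" "j < length cs"
  shows "vote (leader_ballot j) (cs!u) (cs!v) = of_bool (u = j) - of_bool (v = j)"
  using assms by (auto simp: vote_def leader_ballot_def rank_order_def nth_eq_iff)

lemma sum_predecessor_indicator:
  assumes "u < length cs" "v < length cs"
  shows "(\<Sum>j<length cs. of_bool (u = next_index j \<and> v \<noteq> j) :: int) = 1 - of_bool (u = next_index v)"
proof -
  have "(\<Sum>j<length cs. of_bool (u = next_index j) :: int) = (\<Sum>j<length cs. of_bool (u = j))"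
    using sum.reindex_bij_betw[OF bij_next_index, of "\<lambda>j. of_bool (u = j) :: int"] .
  also have "\<dots> = 1"
    using assms by simp
  finally have "(\<Sum>j<length cs. of_bool (u = next_index j) :: int) = 1" .
  moreover have "(\<Sum>j<length cs. of_bool (u = next_index j \<and> v = j) :: int) =
      (\<Sum>j<length cs. if v = j then of_bool (u = next_index v) else 0)"
    by (intro sum.cong) auto
  moreover have "of_bool (u = next_index j \<and> v \<noteq> j) =
      of_bool (u = next_index j) - (of_bool (u = next_index j \<and> v = j) :: int)" for j
    by auto
  ultimately show ?thesis
    using assms by (simp add: sum_subtractf)
qed

lemma sum_vote_edge_ballots:
  assumes "u < length cs" "v < length cs" "u \<noteq> v"
  shows "(\<Sum>j<length cs. vote (edge_ballot j) (cs!u) (cs!v)) =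
    of_bool (next_index u = v) - of_bool (next_index v = u)"
proof -
  have "(\<Sum>j<length cs. vote (edge_ballot j) (cs!u) (cs!v)) =
      (\<Sum>j<length cs. of_bool (u = j) + of_bool (u = next_index j \<and> v \<noteq> j)
        - of_bool (v = j) - of_bool (v = next_index j \<and> u \<noteq> j))"
    using assms by (intro sum.cong) (simp_all add: vote_edge_ballot)
  also have "\<dots> = 1 + (1 - of_bool (u = next_index v)) - 1 - (1 - of_bool (v = next_index u))"
    using assms sum_predecessor_indicator[OF assms(1,2)] sum_predecessor_indicator[OF assms(2,1)]
    by (simp only: sum.distrib sum_subtractf) simp
  finally show ?thesis
    by auto
qed

lemma sum_vote_leader_ballots:
  assumes "u < length cs" "v < length cs" "u \<noteq> v"
  shows "(\<Sum>j<length cs. vote (leader_ballot j) (cs!u) (cs!v)) = 0"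
  using assms by (simp add: vote_leader_ballot sum_subtractf)

lemma abs_vote_edge_ballot_01:
  assumes "j < length cs"
  shows "\<bar>vote (edge_ballot j) (cs!0) (cs!1)\<bar> = of_bool (j = 0) + of_bool (j = 1) + of_bool (j = length cs - 1)"
  using vote_edge_ballot[of 0 1 j] assms long not_Nil by (auto simp: next_index_def)

lemma abs_vote_leader_ballot_01:
  assumes "j < length cs"
  shows "\<bar>vote (leader_ballot j) (cs!0) (cs!1)\<bar> = of_bool (j = 0) + of_bool (j = 1)"
  using vote_leader_ballot[of 0 1 j] assms long not_Nil by auto

text \<open>With \<open>m\<close> rows of all rotations of the edge ballot the margin graph is the cycle with
  weight \<open>m\<close>; the \<open>b\<close> rows of leader ballots and the \<open>e\<close> empty ballots change no margin
  but adjust how many voters rank \<open>cs!0\<close> above, below or level with \<open>cs!1\<close>.\<close>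

definition cycle_voters :: "nat \<Rightarrow> nat \<Rightarrow> nat \<Rightarrow> ((nat \<times> nat) + nat) set" where
  "cycle_voters m b e = ({..<m + b} \<times> {..<length cs}) <+> {..<e}"

definition cycle_ballot :: "nat \<Rightarrow> (nat \<times> nat) + nat \<Rightarrow> ('c \<times> 'c) set" where
  "cycle_ballot m \<iota> =
     (case \<iota> of Inl (r, j) \<Rightarrow> if r < m then edge_ballot j else leader_ballot j | Inr _ \<Rightarrow> {})"

definition rotate_voter :: "(nat \<times> nat) + nat \<Rightarrow> (nat \<times> nat) + nat" where
  "rotate_voter = map_sum (map_prod id next_index) id"

lemma finite_cycle_voters: "finite (cycle_voters m b e)"
  by (simp add: cycle_voters_def)

lemma card_cycle_voters: "card (cycle_voters m b e) = (m + b) * length cs + e"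
  by (simp add: cycle_voters_def card_Plus card_cartesian_product)

lemma bij_rotate_voter: "bij_betw rotate_voter (cycle_voters m b e) (cycle_voters m b e)"
  unfolding rotate_voter_def cycle_voters_def
  by (intro bij_betw_map_sum_id bij_betw_map_prod bij_betw_id bij_next_index)

lemma swo_cycle_ballot: "swo (set cs) (cycle_ballot m \<iota>)"
  by (simp add: cycle_ballot_def edge_ballot_def leader_ballot_def swo_rank_order swo_empty
      split: sum.split prod.split)

lemma cycle_ballot_rotate:
  assumes "\<iota> \<in> cycle_voters m b e" "a \<in> set cs" "c \<in> set cs"
  shows "(a,c) \<in> cycle_ballot m \<iota> \<longleftrightarrow> (shift a, shift c) \<in> cycle_ballot m (rotate_voter \<iota>)"
  using assms edge_ballot_shift leader_ballot_shift
  by (auto simp: cycle_voters_def cycle_ballot_def rotate_voter_def elim!: PlusE)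

lemma sum_cycle_ballots:
  fixes F :: "('c \<times> 'c) set \<Rightarrow> int"
  shows "(\<Sum>\<iota>\<in>cycle_voters m b e. F (cycle_ballot m \<iota>)) =
    int m * (\<Sum>j<length cs. F (edge_ballot j)) + int b * (\<Sum>j<length cs. F (leader_ballot j)) + int e * F {}"
proof -
  have rows: "{..<m + b} = {..<m} \<union> {m..<m + b}"
    by auto
  have "(\<Sum>\<iota>\<in>cycle_voters m b e. F (cycle_ballot m \<iota>)) =
      (\<Sum>r<m + b. \<Sum>j<length cs. F (cycle_ballot m (Inl (r,j)))) + int e * F {}"
    by (simp add: cycle_voters_def sum.Plus sum.cartesian_product cycle_ballot_def prod.case_distrib)
  also have "(\<Sum>r<m + b. \<Sum>j<length cs. F (cycle_ballot m (Inl (r,j)))) =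
      (\<Sum>r<m. \<Sum>j<length cs. F (edge_ballot j)) + (\<Sum>r\<in>{m..<m + b}. \<Sum>j<length cs. F (leader_ballot j))"
    unfolding rows by (subst sum.union_disjoint) (auto simp: cycle_ballot_def intro!: sum.cong)
  finally show ?thesis
    by simp
qed

lemma margin_cycle_ballots:
  assumes "u < length cs" "v < length cs" "u \<noteq> v"
  shows "(\<Sum>\<iota>\<in>cycle_voters m b e. vote (cycle_ballot m \<iota>) (cs!u) (cs!v)) =
    int m * (of_bool (next_index u = v) - of_bool (next_index v = u))"
  using assms sum_cycle_ballots[of "\<lambda>R. vote R (cs!u) (cs!v)"]
  by (simp add: sum_vote_edge_ballots sum_vote_leader_ballots)

lemma votes_cycle_ballots_01:
  "(\<Sum>\<iota>\<in>cycle_voters m b e. vote (cycle_ballot m \<iota>) (cs!0) (cs!1)) = int m"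
  "(\<Sum>\<iota>\<in>cycle_voters m b e. \<bar>vote (cycle_ballot m \<iota>) (cs!0) (cs!1)\<bar>) = 3 * int m + 2 * int b"
proof -
  show "(\<Sum>\<iota>\<in>cycle_voters m b e. vote (cycle_ballot m \<iota>) (cs!0) (cs!1)) = int m"
    using margin_cycle_ballots[of 0 1 m b e] long not_Nil by (simp add: next_index_def)
  have "(\<Sum>j<length cs. \<bar>vote (edge_ballot j) (cs!0) (cs!1)\<bar>) =
      (\<Sum>j<length cs. of_bool (j = 0) + of_bool (j = 1) + of_bool (j = length cs - 1))"
    by (intro sum.cong refl abs_vote_edge_ballot_01) simp
  also have "\<dots> = 3"
    using long not_Nil by (simp add: sum.distrib Int_insert_right)
  finally have "(\<Sum>j<length cs. \<bar>vote (edge_ballot j) (cs!0) (cs!1)\<bar>) = 3" .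
  moreover have "(\<Sum>j<length cs. \<bar>vote (leader_ballot j) (cs!0) (cs!1)\<bar>) =
      (\<Sum>j<length cs. of_bool (j = 0) + of_bool (j = 1))"
    by (intro sum.cong refl abs_vote_leader_ballot_01) simp
  then have "(\<Sum>j<length cs. \<bar>vote (leader_ballot j) (cs!0) (cs!1)\<bar>) = 2"
    using long not_Nil by (simp add: sum.distrib Int_insert_right)
  ultimately show "(\<Sum>\<iota>\<in>cycle_voters m b e. \<bar>vote (cycle_ballot m \<iota>) (cs!0) (cs!1)\<bar>) = 3 * int m + 2 * int b"
    using sum_cycle_ballots[of "\<lambda>R. \<bar>vote R (cs!0) (cs!1)\<bar>"] by simp
qed

lemma symmetric_cycle_profile:
  assumes "profile W X Q"
    and "card W = (m + b) * length cs + e"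
    and "(\<Sum>i\<in>W. vote (Q i) (cs!0) (cs!1)) = int m"
    and "(\<Sum>i\<in>W. \<bar>vote (Q i) (cs!0) (cs!1)\<bar>) = 3 * int m + 2 * int b"
  obtains S \<sigma> where "profile W (set cs) S"
    "\<forall>i\<in>W. vote (S i) (cs!0) (cs!1) = vote (Q i) (cs!0) (cs!1)"
    "\<And>u v. u < length cs \<Longrightarrow> v < length cs \<Longrightarrow> u \<noteq> v \<Longrightarrow>
      margin W S (cs!u) (cs!v) = int m * (of_bool (next_index u = v) - of_bool (next_index v = u))"
    "bij_betw \<sigma> W W"
    "\<forall>i\<in>W. \<forall>a\<in>set cs. \<forall>c\<in>set cs. (a,c) \<in> S i \<longleftrightarrow> (shift a, shift c) \<in> S (\<sigma> i)"
proof -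
  let ?I = "cycle_voters m b e" and ?\<beta> = "cycle_ballot m"
  have "finite W" "W \<noteq> {}"
    using assms(1) by (auto simp: profile_def)
  have "card W = card ?I"
    and "(\<Sum>i\<in>W. vote (Q i) (cs!0) (cs!1)) = (\<Sum>\<iota>\<in>?I. vote (?\<beta> \<iota>) (cs!0) (cs!1))"
    and "(\<Sum>i\<in>W. \<bar>vote (Q i) (cs!0) (cs!1)\<bar>) = (\<Sum>\<iota>\<in>?I. \<bar>vote (?\<beta> \<iota>) (cs!0) (cs!1)\<bar>)"
    using assms(2-4) votes_cycle_ballots_01[of m b e] card_cycle_voters[of m b e] by simp_all
  then have "card {i\<in>W. vote (Q i) (cs!0) (cs!1) = k} = card {\<iota>\<in>?I. vote (?\<beta> \<iota>) (cs!0) (cs!1) = k}" for k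
    by (intro sign_fibers_card_eq[OF \<open>finite W\<close> finite_cycle_voters]) (simp_all add: vote_bounded)
  then obtain \<tau> where \<tau>: "bij_betw \<tau> W ?I" "\<forall>i\<in>W. vote (?\<beta> (\<tau> i)) (cs!0) (cs!1) = vote (Q i) (cs!0) (cs!1)"
    by (rule fiber_preserving_bij[OF \<open>finite W\<close> finite_cycle_voters])
  define S where "S i = (if i \<in> W then ?\<beta> (\<tau> i) else {})" for i
  define \<sigma> where "\<sigma> i = inv_into W \<tau> (rotate_voter (\<tau> i))" for i
  have \<sigma>: "bij_betw \<sigma> W W" "\<And>i. i \<in> W \<Longrightarrow> \<tau> (\<sigma> i) = rotate_voter (\<tau> i)"
    unfolding \<sigma>_def using bij_betw_conjugate[OF \<tau>(1) bij_rotate_voter] by auto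
  have \<tau>I: "\<tau> i \<in> ?I" and "\<sigma> i \<in> W" if "i \<in> W" for i
    using \<tau>(1) \<sigma>(1) that by (auto simp: bij_betw_def)
  then have "\<forall>i\<in>W. \<forall>a\<in>set cs. \<forall>c\<in>set cs. (a,c) \<in> S i \<longleftrightarrow> (shift a, shift c) \<in> S (\<sigma> i)"
    using cycle_ballot_rotate[OF \<tau>I] \<sigma>(2) by (simp add: S_def)
  moreover have "profile W (set cs) S" "margin W S a c = (\<Sum>\<iota>\<in>?I. vote (?\<beta> \<iota>) a c)" for a c
    unfolding S_def using transported_profile[OF \<tau>(1) \<open>finite W\<close> \<open>W \<noteq> {}\<close> _ _ swo_cycle_ballot] not_Nil
    by simp_all
  ultimately show thesis
    using that[OF _ _ _ \<sigma>(1)] \<tau>(2) margin_cycle_ballots by (simp add: S_def)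
qed

lemma symmetric_cycle_profile_no_defeat:
  fixes f :: "('v,'c) vccr"
  assumes "anonymity f" "neutrality f" "availability f"
    and "profile W (set cs) S" "bij_betw \<sigma> W W"
    and "\<forall>i\<in>W. \<forall>a\<in>set cs. \<forall>c\<in>set cs. (a,c) \<in> S i \<longleftrightarrow> (shift a, shift c) \<in> S (\<sigma> i)"
  shows "(cs!0, cs!1) \<notin> f W (set cs) S"
proof
  assume first: "(cs!0, cs!1) \<in> f W (set cs) S"
  have edge: "(cs!j, cs ! next_index j) \<in> f W (set cs) S" if "j < length cs" for j
    using that
  proof (induction j)
    case 0
    then show ?case
      using first long by (simp add: next_index_def)
  next
    case (Suc j)
    then have "j < length cs" "next_index j = Suc j"
      by (auto simp: next_index_def)
    moreover have "cs!j \<in> set cs" "cs ! next_index j \<in> set cs"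
      using \<open>j < length cs\<close> next_index_less by simp_all
    ultimately have "(shift (cs!j), shift (cs ! next_index j)) \<in> f W (set cs) S"
      using defeat_symmetric_profile[OF assms(1,2,4) bij_shift assms(5,6)] Suc.IH by simp
    then show ?case
      using \<open>j < length cs\<close> \<open>next_index j = Suc j\<close> Suc.prems by (simp add: shift_nth)
  qed
  obtain z where "z \<in> set cs" "\<forall>w. (w,z) \<notin> f W (set cs) S"
    using assms(3,4) unfolding availability_def by blast
  then obtain u where "u < length cs" "z = cs!u"
    by (auto simp: in_set_conv_nth)
  moreover obtain j where "j < length cs" "next_index j = u"
    using bij_next_index \<open>u < length cs\<close> by (metis bij_betw_iff_bijections lessThan_iff)
  ultimately show False
    using edge \<open>\<forall>w. (w,z) \<notin> f W (set cs) S\<close> by blast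
qed

lemma coh_reduct_cycle_profile:
  assumes "profile W X Q" "set cs \<subseteq> X" "profile W (set cs) S"
    and "\<forall>i\<in>W. vote (S i) (cs!0) (cs!1) = vote (Q i) (cs!0) (cs!1)"
    and "\<And>u v. u < length cs \<Longrightarrow> v < length cs \<Longrightarrow> u \<noteq> v \<Longrightarrow>
      margin W S (cs!u) (cs!v) = int m * (of_bool (next_index u = v) - of_bool (next_index v = u))"
    and "\<forall>j<length cs. int m \<le> margin W Q (cs!j) (cs ! next_index j)"
  shows "coh_reduct (cs!0) (cs!1) W X Q W (set cs) S"
  unfolding coh_reduct_def
proof (intro conjI ballI impI)
  show "cs!0 \<in> set cs" "cs!1 \<in> set cs"
    using nth_mem[of 0 cs] nth_mem[of 1 cs] long not_Nil by simp_all
  show "set cs \<subseteq> X" "W = W"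
    using assms(2) by simp_all
  show "Q i \<inter> ({cs!0, cs!1} \<times> {cs!0, cs!1}) = S i \<inter> ({cs!0, cs!1} \<times> {cs!0, cs!1})" if "i \<in> W" for i
    using restrict_eq_if_vote_eq[of X "Q i" "set cs" "S i"] assms(1,3,4) that by (simp add: profile_def)
  fix a c
  assume "a \<in> set cs" "c \<in> set cs" and pos: "{a,c} \<noteq> {cs!0, cs!1} \<and> 0 < margin W S a c"
  then obtain u v where uv: "u < length cs" "v < length cs" "a = cs!u" "c = cs!v"
    by (auto simp: in_set_conv_nth)
  then have "u \<noteq> v"
    using pos by auto
  have "margin W S a c = int m * (of_bool (next_index u = v) - of_bool (next_index v = u))"
    using assms(5)[OF uv(1,2) \<open>u \<noteq> v\<close>] uv by simp
  moreover have "0 < margin W S a c"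
    using pos by blast
  ultimately have "next_index u = v" "margin W S a c = int m"
    by (cases "next_index u = v"; cases "next_index v = u"; simp)+
  moreover have "int m \<le> margin W Q (cs!u) (cs ! next_index u)"
    using assms(6) uv(1) by blast
  ultimately show "margin W S a c \<le> margin W Q a c"
    using uv by simp
qed

lemma padded_profile_for_cycle:
  fixes f :: "('v,'c) vccr"
  assumes "infinite (UNIV :: 'v set)" "neutral_reversal f" "profile V X P" "set cs \<subseteq> X"
    and "0 < margin V P (cs!0) (cs!1)"
  defines "m \<equiv> nat (margin V P (cs!0) (cs!1))" and "b \<equiv> card {i\<in>V. vote (P i) (cs!0) (cs!1) = -1}"
  obtains V' P' where "profile V' X P'" "f V' X P' = f V X P" "\<And>a c. margin V' P' a c = margin V P a c"
    "card V' = (m + b) * length cs + (card V + 2 * m + (m + b) * length cs)"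
    "(\<Sum>i\<in>V'. vote (P' i) (cs!0) (cs!1)) = int m"
    "(\<Sum>i\<in>V'. \<bar>vote (P' i) (cs!0) (cs!1)\<bar>) = 3 * int m + 2 * int b"
proof -
  have "finite V"
    using assms(3) by (simp add: profile_def)
  have "cs!0 \<in> X" "cs!1 \<in> X" "cs!0 \<noteq> cs!1"
    using assms(4) long not_Nil nth_eq_iff[of 0 1] nth_mem[of 0 cs] nth_mem[of 1 cs] by auto
  have m: "int m = margin V P (cs!0) (cs!1)"
    using assms(5) by (simp add: m_def)
  obtain V' P' where "profile V' X P'" "f V' X P' = f V X P"
    and margin: "\<And>a c. margin V' P' a c = margin V P a c"
    and card: "card V' = card V + 2 * m + 2 * ((m + b) * length cs)"
    and abs_sum: "(\<Sum>i\<in>V'. \<bar>vote (P' i) (cs!0) (cs!1)\<bar>) = (\<Sum>i\<in>V. \<bar>vote (P i) (cs!0) (cs!1)\<bar>) + 2 * int m"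
    using padded_profile[OF assms(1-3) \<open>cs!0 \<in> X\<close> \<open>cs!1 \<in> X\<close> \<open>cs!0 \<noteq> cs!1\<close>,
          where p = m and t = "(m + b) * length cs"] by blast
  show thesis
  proof (rule that[OF \<open>profile V' X P'\<close> \<open>f V' X P' = f V X P\<close> margin])
    show "card V' = (m + b) * length cs + (card V + 2 * m + (m + b) * length cs)"
      using card by simp
    show "(\<Sum>i\<in>V'. vote (P' i) (cs!0) (cs!1)) = int m"
      using \<open>profile V' X P'\<close> margin m by (simp add: margin_eq_sum_vote profile_def)
    have "(\<Sum>i\<in>V. \<bar>vote (P i) (cs!0) (cs!1)\<bar>) = int m + 2 * int b"
      using sign_counts(1,2)[OF \<open>finite V\<close>, of "\<lambda>i. vote (P i) (cs!0) (cs!1)"] m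
      by (simp add: vote_bounded margin_eq_sum_vote[OF \<open>finite V\<close>] b_def)
    then show "(\<Sum>i\<in>V'. \<bar>vote (P' i) (cs!0) (cs!1)\<bar>) = 3 * int m + 2 * int b"
      using abs_sum by simp
  qed
qed

lemma defeat_closing_strong_cycle:
  fixes f :: "('v,'c) vccr"
  assumes "infinite (UNIV :: 'v set)" "anonymity f" "neutrality f" "availability f"
    and "neutral_reversal f" "coherent_IIA f"
    and "profile V X P" "set cs \<subseteq> X" "0 < margin V P (cs!0) (cs!1)"
    and "\<forall>j<length cs. margin V P (cs!0) (cs!1) \<le> margin V P (cs!j) (cs ! next_index j)"
  shows "(cs!0, cs!1) \<notin> f V X P"
proof
  assume defeat: "(cs!0, cs!1) \<in> f V X P"
  let ?m = "nat (margin V P (cs!0) (cs!1))" and ?b = "card {i\<in>V. vote (P i) (cs!0) (cs!1) = -1}"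
  obtain V' P' where "profile V' X P'" "f V' X P' = f V X P"
    and margin: "\<And>a c. margin V' P' a c = margin V P a c"
    and "card V' = (?m + ?b) * length cs + (card V + 2 * ?m + (?m + ?b) * length cs)"
      "(\<Sum>i\<in>V'. vote (P' i) (cs!0) (cs!1)) = int ?m"
      "(\<Sum>i\<in>V'. \<bar>vote (P' i) (cs!0) (cs!1)\<bar>) = 3 * int ?m + 2 * int ?b"
    using padded_profile_for_cycle[OF assms(1,5,7-9)] by blast
  then obtain S \<sigma> where S: "profile V' (set cs) S"
    "\<forall>i\<in>V'. vote (S i) (cs!0) (cs!1) = vote (P' i) (cs!0) (cs!1)"
    "\<And>u v. u < length cs \<Longrightarrow> v < length cs \<Longrightarrow> u \<noteq> v \<Longrightarrow>
      margin V' S (cs!u) (cs!v) = int ?m * (of_bool (next_index u = v) - of_bool (next_index v = u))"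
    "bij_betw \<sigma> V' V'" "\<forall>i\<in>V'. \<forall>a\<in>set cs. \<forall>c\<in>set cs. (a,c) \<in> S i \<longleftrightarrow> (shift a, shift c) \<in> S (\<sigma> i)"
    using symmetric_cycle_profile[OF \<open>profile V' X P'\<close>] by blast
  have "\<forall>j<length cs. int ?m \<le> margin V' P' (cs!j) (cs ! next_index j)"
    using assms(9,10) margin by simp
  then have "coh_reduct (cs!0) (cs!1) V' X P' V' (set cs) S"
    using coh_reduct_cycle_profile[OF \<open>profile V' X P'\<close> assms(8) S(1,2,3)] by blast
  then have "(cs!0, cs!1) \<in> f V' (set cs) S"
    using assms(6) defeat \<open>profile V' X P'\<close> S(1) \<open>f V' X P' = f V X P\<close>
    unfolding coherent_IIA_def by blast
  then show False
    using symmetric_cycle_profile_no_defeat[OF assms(2-4) S(1,4,5)] by blast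
qed

end

section \<open>Every defeat is a Split Cycle defeat\<close>

lemma strong_cycle_through_edge:
  assumes "x \<in> X" "y \<in> X" "0 < margin V P x y" "(y,x) \<in> (threshold_graph V X P (margin V P x y))\<^sup>+"
  obtains cs where "cycle cs" "cs!0 = x" "cs!1 = y" "set cs \<subseteq> X"
    "\<forall>j<length cs. margin V P x y \<le> margin V P (cs!j) (cs ! cycle.next_index cs j)"
proof -
  let ?G = "threshold_graph V X P (margin V P x y)"
  have "y \<noteq> x"
    using assms(3) by auto
  with assms(4) obtain xs where path: "distinct (y # xs)" "xs \<noteq> []" "last xs = x"
    "successively (\<lambda>u v. (u,v) \<in> ?G) (y # xs)"
    by (rule trancl_distinct_path)
  have "butlast xs \<noteq> []"
  proof
    assume "butlast xs = []"
    then have "xs = [x]"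
      using path(2,3) by (cases xs rule: rev_cases) auto
    then have "(y,x) \<in> ?G"
      using path(4) by simp
    then show False
      using assms(3) margin_antisym[of V P y x] by (simp add: threshold_graph_def)
  qed
  define cs where "cs = x # y # butlast xs"
  interpret cycle cs
    using close_distinct_path[OF path(1,3) \<open>butlast xs \<noteq> []\<close>] by unfold_locales (simp_all add: cs_def)
  have walk: "successively (\<lambda>u v. (u,v) \<in> ?G) (cs @ [hd cs])"
    using close_distinct_path(2)[OF path(1,3) \<open>butlast xs \<noteq> []\<close>] path(4) assms(1,2)
    by (simp add: cs_def threshold_graph_def)
  have "?G \<subseteq> X \<times> X"
    by (auto simp: threshold_graph_def)
  then have "set cs \<subseteq> X"
    using successively_set_subset[OF walk] long by simp
  moreover have "\<forall>j<length cs. (cs!j, cs ! next_index j) \<in> ?G"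
    using walk by (simp only: successively_cycle_iff)
  ultimately show thesis
    using that[OF cycle_axioms] by (simp add: cs_def threshold_graph_def)
qed

lemma defeats_subset_sc:
  fixes f :: "('v,'c) vccr"
  assumes "infinite (UNIV :: 'v set)" "is_vccr f" "anonymity f" "neutrality f" "availability f"
    and "neutral_reversal f" "coherent_IIA f" "coherent_defeat f"
    and "profile V X P" "(x,y) \<in> f V X P"
  shows "(x,y) \<in> sc V X P"
proof -
  have "0 < margin V P x y"
    using defeat_margin_pos[OF assms(2-4,7,8) assms(9,10)] .
  moreover have "x \<in> X" "y \<in> X"
    using assms(2,9,10) unfolding is_vccr_def by blast+
  moreover have "(y,x) \<notin> (threshold_graph V X P (margin V P x y))\<^sup>+"
  proof
    assume "(y,x) \<in> (threshold_graph V X P (margin V P x y))\<^sup>+"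
    then obtain cs where "cycle cs" "cs!0 = x" "cs!1 = y" "set cs \<subseteq> X"
      "\<forall>j<length cs. margin V P x y \<le> margin V P (cs!j) (cs ! cycle.next_index cs j)"
      by (rule strong_cycle_through_edge[OF \<open>x \<in> X\<close> \<open>y \<in> X\<close> \<open>0 < margin V P x y\<close>])
    then show False
      using cycle.defeat_closing_strong_cycle[OF \<open>cycle cs\<close> assms(1,3-7,9)] assms(10)
        \<open>0 < margin V P x y\<close> by simp
  qed
  ultimately show ?thesis
    by (simp add: sc_iff)
qed

lemma characterization:
  fixes f :: "('v,'c) vccr"
  assumes "infinite (UNIV :: 'v set)" "is_vccr f" "anonymity f" "neutrality f" "availability f"
    and "neutral_reversal f" "coherent_IIA f" "coherent_defeat f" "positive_involvement_defeat f"
    and "profile V X P"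
  shows "f V X P = sc V X P"
  using defeats_subset_sc[OF assms(1-8,10)] sc_subset_defeats[OF assms(1,8,9,10)] by auto

theorem theorem7p10:
  assumes "infinite (UNIV :: 'v set)" and "infinite (UNIV :: 'c set)"
  shows "(is_vccr (sc :: ('v,'c) vccr) \<and> anonymity (sc :: ('v,'c) vccr) \<and> neutrality (sc :: ('v,'c) vccr)
          \<and> availability (sc :: ('v,'c) vccr) \<and> homogeneity (sc :: ('v,'c) vccr)
          \<and> downward_homogeneity (sc :: ('v,'c) vccr) \<and> neutral_indifference (sc :: ('v,'c) vccr)
          \<and> neutral_reversal (sc :: ('v,'c) vccr) \<and> monotonicity (sc :: ('v,'c) vccr)
          \<and> coherent_IIA (sc :: ('v,'c) vccr) \<and> coherent_defeat (sc :: ('v,'c) vccr)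
          \<and> positive_involvement_defeat (sc :: ('v,'c) vccr))
       \<and> (\<forall>f :: ('v,'c) vccr. is_vccr f \<and> anonymity f \<and> neutrality f \<and> availability f
            \<and> downward_homogeneity f \<and> neutral_indifference f \<and> neutral_reversal f
            \<and> monotonicity_two f \<and> coherent_IIA f \<and> coherent_defeat f
            \<and> positive_involvement_defeat f
            \<longrightarrow> (\<forall>V X P. profile V X P \<longrightarrow> f V X P = sc V X P))
       \<and> (\<forall>f :: ('v,'c) vccr. is_vccr f \<and> anonymity f \<and> neutrality f \<and> availability f
            \<and> homogeneity f \<and> neutral_reversal f
            \<and> monotonicity_two f \<and> coherent_IIA f \<and> coherent_defeat f
            \<and> positive_involvement_defeat f
            \<longrightarrow> (\<forall>V X P. profile V X P \<longrightarrow> f V X P = sc V X P))"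
proof -
  txt \<open>The characterization uses none of Homogeneity, Neutral Indifference and Monotonicity, nor
    infinitely many candidates.\<close>
  show ?thesis
    using characterization[OF assms(1)]
    by (simp add: sc_is_vccr sc_anonymity sc_neutrality sc_availability sc_homogeneity
        sc_downward_homogeneity sc_neutral_indifference sc_neutral_reversal sc_monotonicity
        sc_coherent_IIA sc_coherent_defeat sc_positive_involvement_defeat) blast
qed

end
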